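(* Let $H>0$ and $S_H=\{z\in\mathbb{C}:\,|\operatorname{Im} z|\le H\}$. Let $\mu$ be a positive (locally finite Borel) measure with support in $S_H$ such that for some positive constants $C_0,\rho$ $$\mu(\{z\in S_H:\,|\operatorname{Re} z|\le r\})\le C_0\max\{1,r^\rho\}\quad\text{for all } r>0.$$ Suppose that the c-Fourier transform $\hat\mu^c$ of $\mu$ is a measure on $\mathbb{R}$. Then $\mu$ is translation bounded on $S_H$, i.e. $$\sup_{s\in\mathbb{R}}\mu(\{z\in S_H:\,s\le\operatorname{Re} z\le s+1\})<\infty.$$
   Context: For a function $\varphi\in L^1(\mathbb{R})$ with compact support, set $\hat\varphi^c(z)=\int_{\mathbb{R}}\varphi(t)e^{-2\pi i z t}\,dt$ for $z\in\mathbb{C}$ (an entire function). Let $\mathcal{D}$ be the space of $C^\infty$ functions on $\mathbb{R}$ with compact support. For a measure $\mu$ on $S_H$ satisfying the growth condition above, its c-Fourier transform $\hat\mu^c$ is the continuous linear functional on $\mathcal{D}$ defined by $(\hat\mu^c,\varphi)=\int_{S_H}\hat\varphi^c(z)\,\mu(dz)$. "$\hat\mu^c$ is a measure" means there is a (complex, locally finite) Borel measure $\sigma$ on $\mathbb{R}$ with $(\hat\mu^c,\varphi)=\int_{\mathbb{R}}\varphi\,d\sigma$ for all $\varphi\in\mathcal{D}$. *)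

theory Defs
  imports "HOL-Analysis.Analysis"
begin

definition strip :: "real \<Rightarrow> complex set" where
  "strip H = {z. \<bar>Im z\<bar> \<le> H}"

definition smooth_fun :: "(real \<Rightarrow> complex) \<Rightarrow> bool" where
  "smooth_fun \<phi> \<longleftrightarrow> (\<exists>D :: nat \<Rightarrow> real \<Rightarrow> complex. D 0 = \<phi> \<and>
      (\<forall>n x. (D n has_vector_derivative D (Suc n) x) (at x)))"

definition test_funs :: "(real \<Rightarrow> complex) set" where
  "test_funs = {\<phi>. smooth_fun \<phi> \<and> compact (closure {x. \<phi> x \<noteq> 0})}"

definition fourier_c :: "(real \<Rightarrow> complex) \<Rightarrow> complex \<Rightarrow> complex" where
  "fourier_c \<phi> z = (\<integral>t. \<phi> t * exp (- 2 * of_real pi * \<i> * z * of_real t) \<partial>lborel)"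

definition fourier_c_measure :: "complex measure \<Rightarrow> (real \<Rightarrow> complex) \<Rightarrow> complex" where
  "fourier_c_measure \<mu> \<phi> = (\<integral>z. fourier_c \<phi> z \<partial>\<mu>)"

definition locally_finite_borel :: "'a::metric_space measure \<Rightarrow> bool" where
  "locally_finite_borel M \<longleftrightarrow> sets M = sets borel \<and>
     (\<forall>K. compact K \<longrightarrow> emeasure M K < \<infinity>)"

text \<open>A complex locally finite Borel measure sigma on R, given in polar form
  d sigma = h d nu with nu positive locally finite and |h| = 1.
  The c-Fourier transform of mu "is a measure" if it acts on test functions as such a sigma.\<close>
definition fourier_c_is_measure :: "complex measure \<Rightarrow> bool" where
  "fourier_c_is_measure \<mu> \<longleftrightarrow>
     (\<exists>(\<nu>::real measure) (h::real \<Rightarrow> complex).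
        locally_finite_borel \<nu> \<and> h \<in> borel_measurable borel \<and> (\<forall>x. norm (h x) = 1) \<and>
        (\<forall>\<phi>\<in>test_funs. (\<integral>x. \<phi> x * h x \<partial>\<nu>) = fourier_c_measure \<mu> \<phi>))"

end

theory Submission
  imports Defs "HOL-Computational_Algebra.Polynomial"
begin

text \<open>Let \<open>b \<ge> 0\<close> be a smooth even bump supported in \<open>[-1/2, 1/2]\<close> and \<open>k = b * b\<close>, so
  that \<open>k\<^sup>^ = (b\<^sup>^)\<^sup>2\<close> is nonnegative on the real axis and bounded below by some \<open>c > 0\<close> on
  \<open>[-1/6, 1/6]\<close>. The test function \<open>\<phi>(t) = \<delta>\<^sup>-\<^sup>1 k(t/\<delta>) e\<^sup>2\<^sup>\<pi>\<^sup>i\<^sup>s\<^sup>t\<close> has c-transform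
  \<open>k\<^sup>^(\<delta>(z - s))\<close>, so if \<open>\<mu>\<^sup>^ = \<sigma>\<close> is a measure then \<open>|\<integral> k\<^sup>^(\<delta>(z - s)) d\<mu>(z)| = |\<integral> \<phi> d\<sigma>|\<close> is
  bounded by some \<open>A\<close> uniformly in \<open>s\<close>. On the strip, \<open>k\<^sup>^(\<delta>(z - s))\<close> differs from its value at
  \<open>\<delta>(Re z - s)\<close> by \<open>O(\<delta>H)\<close> times a weight decaying like \<open>(1 + \<delta>|Re z - s|)\<^sup>-\<^sup>n\<close>, because
  \<open>k\<^sup>^\<close> and its variation in the imaginary direction decay rapidly. Integrating, the mass
  \<open>N(s)\<close> of the window \<open>|Re z - s| \<le> T = 1/(6\<delta>)\<close> satisfies
  \<open>c N(s) \<le> A + O(\<delta>H) \<Sum>\<^sub>j (2j + 1)\<^sup>-\<^sup>n (N(s + (2j + 2)T) + N(s - (2j + 2)T))\<close>.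
  The polynomial growth of \<open>\<mu>\<close> keeps \<open>N(a) / (1 + |a|/R)\<^sup>m\<close> bounded, so for \<open>\<delta>\<close> small the
  error term can be absorbed into the left-hand side, and \<open>N\<close> is bounded.\<close>

section \<open>A flat smooth function\<close>

lemma poly_inverse_times_exp_tendsto_0:
  "((\<lambda>t::real. poly p (inverse t) * exp (- inverse t)) \<longlongrightarrow> 0) (at_right 0)"
proof -
  have "((\<lambda>x::real. \<Sum>i\<le>degree p. coeff p i * (x ^ i / exp x)) \<longlongrightarrow> (\<Sum>i\<le>degree p. coeff p i * 0)) at_top"
    by (intro tendsto_sum tendsto_mult tendsto_const tendsto_power_div_exp_0)
  moreover have "(\<lambda>x::real. poly p x * exp (- x)) = (\<lambda>x. \<Sum>i\<le>degree p. coeff p i * (x ^ i / exp x))"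
    by (auto simp: poly_altdef sum_divide_distrib exp_minus field_simps)
  ultimately have "((\<lambda>x::real. poly p x * exp (- x)) \<longlongrightarrow> 0) at_top"
    by simp
  from filterlim_compose[OF this filterlim_inverse_at_top_right] show ?thesis
    by (simp add: o_def)
qed

text \<open>The derivative of \<open>p(1/t) e\<^sup>-\<^sup>1\<^sup>/\<^sup>t\<close> is \<open>q(1/t) e\<^sup>-\<^sup>1\<^sup>/\<^sup>t\<close> with \<open>q(x) = x\<^sup>2 (p(x) - p'(x))\<close>.\<close>

fun flat_poly :: "nat \<Rightarrow> real poly" where
  "flat_poly 0 = 1"
| "flat_poly (Suc n) = [:0, 0, 1:] * (flat_poly n - pderiv (flat_poly n))"

definition flat :: "nat \<Rightarrow> real \<Rightarrow> real" where
  "flat n t = (if 0 < t then poly (flat_poly n) (inverse t) * exp (- inverse t) else 0)"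

lemma flat_has_real_derivative_pos:
  assumes "0 < t"
  shows "(flat n has_real_derivative flat (Suc n) t) (at t)"
proof -
  have "((\<lambda>t. poly (flat_poly n) (inverse t) * exp (- inverse t)) has_real_derivative
     (poly (pderiv (flat_poly n)) (inverse t) * (- inverse (t^2)) * exp (- inverse t) +
      poly (flat_poly n) (inverse t) * (exp (- inverse t) * inverse (t^2)))) (at t)"
    using assms
    by (auto intro!: derivative_eq_intros DERIV_chain2[OF poly_DERIV] simp: power2_eq_square)
  moreover have "poly (pderiv (flat_poly n)) (inverse t) * (- inverse (t^2)) * exp (- inverse t) +
      poly (flat_poly n) (inverse t) * (exp (- inverse t) * inverse (t^2)) = flat (Suc n) t"
    using assms by (simp add: flat_def algebra_simps power2_eq_square)
  ultimately show ?thesis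
    using assms
    by (auto simp: flat_def intro: has_field_derivative_transform_within_open[where S="{0<..}"])
qed

lemma flat_has_real_derivative: "(flat n has_real_derivative flat (Suc n) t) (at t)"
proof -
  consider "0 < t" | "t < 0" | "t = 0" by linarith
  then show ?thesis
  proof cases
    case 1
    then show ?thesis by (rule flat_has_real_derivative_pos)
  next
    case 2
    have "((\<lambda>_. 0::real) has_real_derivative flat (Suc n) t) (at t)"
      using 2 by (simp add: flat_def)
    then show ?thesis
      by (rule has_field_derivative_transform_within_open[where S="{..<0}"])
        (use 2 in \<open>auto simp: flat_def\<close>)
  next
    case 3
    have "((\<lambda>y. (flat n y - flat n 0) / (y - 0)) \<longlongrightarrow> 0) (at 0)"
    proof (rule filterlim_split_at)
      show "((\<lambda>y. (flat n y - flat n 0) / (y - 0)) \<longlongrightarrow> 0) (at_left 0)"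
        by (rule tendsto_eventually) (auto simp: flat_def eventually_at_filter)
      have "\<forall>\<^sub>F y in at_right 0. poly ([:0, 1:] * flat_poly n) (inverse y) * exp (- inverse y)
          = (flat n y - flat n 0) / (y - 0)"
        by (rule eventually_mono[OF eventually_at_right_less]) (simp add: flat_def field_simps)
      then show "((\<lambda>y. (flat n y - flat n 0) / (y - 0)) \<longlongrightarrow> 0) (at_right 0)"
        by (rule Lim_transform_eventually[OF poly_inverse_times_exp_tendsto_0])
    qed
    then show ?thesis
      using 3 by (simp add: has_field_derivative_iff flat_def)
  qed
qed

definition deriv_seq :: "(nat \<Rightarrow> real \<Rightarrow> complex) \<Rightarrow> bool" where
  "deriv_seq D \<longleftrightarrow> (\<forall>n x. (D n has_vector_derivative D (Suc n) x) (at x))"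

lemma deriv_seqD: "deriv_seq D \<Longrightarrow> (D n has_vector_derivative D (Suc n) x) (at x within S)"
  unfolding deriv_seq_def using has_vector_derivative_at_within by blast

lemma smooth_fun_deriv_seq: "deriv_seq D \<Longrightarrow> smooth_fun (D 0)"
  unfolding smooth_fun_def deriv_seq_def by blast

lemma deriv_seq_continuous_on: "deriv_seq D \<Longrightarrow> continuous_on S (D n)"
  unfolding deriv_seq_def
  by (intro continuous_at_imp_continuous_on ballI has_vector_derivative_continuous) blast

lemma deriv_seq_of_real:
  assumes "\<And>n t. (F n has_real_derivative F (Suc n) t) (at t)"
  shows "deriv_seq (\<lambda>n t. complex_of_real (F n t))"
  unfolding deriv_seq_def using has_vector_derivative_of_real[OF assms] by blast

lemma deriv_seq_affine:
  assumes "deriv_seq D"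
  shows "deriv_seq (\<lambda>n t. complex_of_real (c ^ n) * D n (c * t + d))"
  unfolding deriv_seq_def
proof (intro allI)
  fix n x
  have "((\<lambda>t. c * t + d) has_vector_derivative c) (at x)"
    by (auto intro!: derivative_eq_intros)
  then have "((D n \<circ> (\<lambda>t. c * t + d)) has_vector_derivative (c *\<^sub>R D (Suc n) (c * x + d))) (at x)"
    by (rule vector_diff_chain_at) (use assms in \<open>simp add: deriv_seq_def\<close>)
  then have "((\<lambda>t. complex_of_real (c ^ n) * D n (c * t + d)) has_vector_derivative
     complex_of_real (c ^ n) * (c *\<^sub>R D (Suc n) (c * x + d))) (at x)"
    by (intro derivative_intros) (simp add: o_def)
  then show "((\<lambda>t. complex_of_real (c ^ n) * D n (c * t + d)) has_vector_derivative
     complex_of_real (c ^ Suc n) * D (Suc n) (c * x + d)) (at x)"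
    by (simp add: scaleR_conv_of_real mult_ac)
qed

lemma deriv_seq_cmult: "deriv_seq D \<Longrightarrow> deriv_seq (\<lambda>n t. a * D n t)"
  unfolding deriv_seq_def by (auto intro!: derivative_intros)

lemma deriv_seq_diff: "deriv_seq D \<Longrightarrow> deriv_seq E \<Longrightarrow> deriv_seq (\<lambda>n t. D n t - E n t)"
  unfolding deriv_seq_def by (auto intro!: derivative_intros)

lemma deriv_seq_exp: "deriv_seq (\<lambda>n t. c ^ n * exp (c * complex_of_real t))"
  unfolding deriv_seq_def
proof (intro allI)
  fix n x
  have "((\<lambda>z. exp (c * z)) has_field_derivative (exp (c * complex_of_real x) * c)) (at (complex_of_real x))"
    by (auto intro!: derivative_eq_intros)
  then have "((\<lambda>t. exp (c * complex_of_real t)) has_vector_derivative (exp (c * complex_of_real x) * c)) (at x)"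
    by (rule has_vector_derivative_real_field)
  then show "((\<lambda>t. c ^ n * exp (c * complex_of_real t)) has_vector_derivative
      c ^ Suc n * exp (c * complex_of_real x)) (at x)"
    by (auto intro!: derivative_eq_intros simp: algebra_simps)
qed

text \<open>The Pascal step of the Leibniz rule for higher derivatives of a product.\<close>

lemma Leibniz_sum_Suc:
  fixes F G :: "nat \<Rightarrow> 'a::comm_semiring_1"
  shows "(\<Sum>k\<le>n. of_nat (n choose k) * (F k * G (Suc (n - k)) + F (Suc k) * G (n - k))) =
         (\<Sum>k\<le>Suc n. of_nat (Suc n choose k) * (F k * G (Suc n - k)))"
proof -
  have shifted: "(\<Sum>k\<le>n. of_nat (n choose k) * (F k * G (Suc (n - k)))) =
        F 0 * G (Suc n) + (\<Sum>k\<le>n. of_nat (n choose Suc k) * (F (Suc k) * G (n - k)))"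
  proof (cases n)
    case 0
    then show ?thesis by simp
  next
    case (Suc m)
    have "(\<Sum>k\<le>Suc m. of_nat (Suc m choose k) * (F k * G (Suc (Suc m - k)))) =
       F 0 * G (Suc (Suc m)) + (\<Sum>k\<le>m. of_nat (Suc m choose Suc k) * (F (Suc k) * G (Suc (Suc m - Suc k))))"
      by (subst sum.atMost_Suc_shift) simp
    also have "(\<Sum>k\<le>m. of_nat (Suc m choose Suc k) * (F (Suc k) * G (Suc (Suc m - Suc k)))) =
       (\<Sum>k\<le>Suc m. of_nat (Suc m choose Suc k) * (F (Suc k) * G (Suc m - k)))"
      by (simp only: sum.atMost_Suc binomial_eq_0[of "Suc m" "Suc (Suc m)"] lessI of_nat_0
          mult_zero_left add_0_right Suc_diff_le diff_Suc_Suc)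
        (rule sum.cong, auto simp: Suc_diff_le)
    finally show ?thesis using Suc by simp
  qed
  have "(\<Sum>k\<le>Suc n. of_nat (Suc n choose k) * (F k * G (Suc n - k))) =
      F 0 * G (Suc n) + (\<Sum>k\<le>n. of_nat (Suc n choose Suc k) * (F (Suc k) * G (n - k)))"
    by (subst sum.atMost_Suc_shift) simp
  also have "\<dots> = F 0 * G (Suc n) + (\<Sum>k\<le>n. of_nat (n choose k) * (F (Suc k) * G (n - k)))
      + (\<Sum>k\<le>n. of_nat (n choose Suc k) * (F (Suc k) * G (n - k)))"
    by (simp add: distrib_right sum.distrib add_ac)
  finally show ?thesis
    using shifted by (simp add: distrib_left sum.distrib add_ac)
qed

lemma deriv_seq_mult:
  assumes "deriv_seq F" "deriv_seq G"
  shows "deriv_seq (\<lambda>n t. \<Sum>k\<le>n. of_nat (n choose k) * (F k t * G (n - k) t))"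
  unfolding deriv_seq_def
proof (intro allI)
  fix n x
  have "((\<lambda>t. \<Sum>k\<le>n. of_nat (n choose k) * (F k t * G (n - k) t)) has_vector_derivative
     (\<Sum>k\<le>n. of_nat (n choose k) * (F k x * G (Suc (n - k)) x + F (Suc k) x * G (n - k) x))) (at x)"
    using assms unfolding deriv_seq_def by (auto intro!: derivative_eq_intros)
  then show "((\<lambda>t. \<Sum>k\<le>n. of_nat (n choose k) * (F k t * G (n - k) t)) has_vector_derivative
     (\<Sum>k\<le>Suc n. of_nat (Suc n choose k) * (F k x * G (Suc n - k) x))) (at x)"
    by (simp only: Leibniz_sum_Suc[of n "\<lambda>k. F k x" "\<lambda>k. G k x"])
qed

definition vanishes_beyond :: "real \<Rightarrow> (real \<Rightarrow> 'a::zero) \<Rightarrow> bool" where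
  "vanishes_beyond a f \<longleftrightarrow> (\<forall>t. a < \<bar>t\<bar> \<longrightarrow> f t = 0)"

lemma deriv_seq_vanishes_beyond:
  assumes "deriv_seq D" "vanishes_beyond a (D 0)"
  shows "vanishes_beyond a (D n)"
proof (induction n)
  case 0
  then show ?case using assms by simp
next
  case (Suc n)
  show ?case
    unfolding vanishes_beyond_def
  proof (intro allI impI)
    fix t
    assume t: "a < \<bar>t\<bar>"
    have "((\<lambda>_. 0) has_vector_derivative 0) (at t)" by simp
    then have "(D n has_vector_derivative 0) (at t)"
      by (rule has_vector_derivative_transform_within_open[where S="{t. a < \<bar>t\<bar>}"])
        (use t Suc in \<open>auto simp: vanishes_beyond_def intro!: open_Collect_less continuous_intros\<close>)
    moreover have "(D n has_vector_derivative D (Suc n) t) (at t)"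
      using assms(1) by (simp add: deriv_seq_def)
    ultimately show "D (Suc n) t = 0"
      by (rule vector_derivative_unique_at[symmetric])
  qed
qed

lemma vanishes_beyond_bounded:
  fixes f :: "real \<Rightarrow> 'a::real_normed_vector"
  assumes "continuous_on UNIV f" "vanishes_beyond a f"
  shows "\<exists>M. \<forall>t. norm (f t) \<le> M"
proof -
  have "compact (f ` {-a..a})"
    by (intro compact_continuous_image continuous_on_subset[OF assms(1)]) auto
  then obtain M where "\<forall>y\<in>f ` {-a..a}. norm y \<le> M"
    using compact_imp_bounded bounded_iff by blast
  then have M: "\<And>t. t \<in> {-a..a} \<Longrightarrow> norm (f t) \<le> M"
    by blast
  have "norm (f t) \<le> max M 0" for t
    using M[of t] assms(2)
    by (cases "\<bar>t\<bar> \<le> a") (auto simp: vanishes_beyond_def abs_le_iff max.coboundedI1)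
  then show ?thesis by blast
qed

lemma deriv_seq_in_test_funs:
  assumes "deriv_seq D" "vanishes_beyond a (D 0)"
  shows "D 0 \<in> test_funs"
proof -
  have "{x. D 0 x \<noteq> 0} \<subseteq> {-\<bar>a\<bar>..\<bar>a\<bar>}"
    using assms(2) by (force simp: vanishes_beyond_def)
  then have "closure {x. D 0 x \<noteq> 0} \<subseteq> {-\<bar>a\<bar>..\<bar>a\<bar>}"
    by (intro closure_minimal) auto
  then have "compact (closure {x. D 0 x \<noteq> 0})"
    by (meson compact_imp_bounded[OF compact_Icc] bounded_subset closed_closure
        compact_eq_bounded_closed)
  with smooth_fun_deriv_seq[OF assms(1)] show ?thesis
    by (simp add: test_funs_def)
qed

section \<open>The c-Fourier transform of compactly supported functions\<close>

definition fourier_kernel :: "complex \<Rightarrow> real \<Rightarrow> complex" where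
  "fourier_kernel w t = exp (- 2 * of_real pi * \<i> * w * of_real t)"

lemma fourier_c_kernel: "fourier_c g w = (\<integral>t. g t * fourier_kernel w t \<partial>lborel)"
  by (simp add: fourier_c_def fourier_kernel_def)

lemma continuous_on_fourier_kernel [continuous_intros]:
  "continuous_on S f \<Longrightarrow> continuous_on S (\<lambda>x. fourier_kernel w (f x))"
  unfolding fourier_kernel_def by (intro continuous_intros)

lemma fourier_kernel_has_vector_derivative:
  "(fourier_kernel w has_vector_derivative (- 2 * of_real pi * \<i> * w) * fourier_kernel w t) (at t within S)"
proof -
  have "((\<lambda>z. exp (- 2 * of_real pi * \<i> * w * z)) has_field_derivative
      exp (- 2 * of_real pi * \<i> * w * of_real t) * (- 2 * of_real pi * \<i> * w)) (at (of_real t))"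
    by (auto intro!: derivative_eq_intros)
  from has_vector_derivative_real_field[OF this] show ?thesis
    unfolding fourier_kernel_def[abs_def] by (simp only: mult.commute)
qed

lemma norm_fourier_kernel: "norm (fourier_kernel w t) = exp (2 * pi * Im w * t)"
  by (simp add: fourier_kernel_def norm_exp_eq_Re)

lemma norm_fourier_kernel_le:
  assumes "\<bar>t\<bar> \<le> a"
  shows "norm (fourier_kernel w t) \<le> exp (2 * pi * a * \<bar>Im w\<bar>)"
proof -
  have "Im w * t \<le> \<bar>Im w\<bar> * \<bar>t\<bar>"
    by (metis abs_ge_self abs_mult)
  also have "\<dots> \<le> \<bar>Im w\<bar> * a"
    using assms by (intro mult_left_mono) auto
  finally show ?thesis
    unfolding norm_fourier_kernel by (simp add: mult_ac)
qed

lemma fourier_kernel_add: "fourier_kernel w (u + x) = fourier_kernel w u * fourier_kernel w x"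
  unfolding fourier_kernel_def by (simp add: exp_add[symmetric] algebra_simps)

lemma lborel_integral_eq_integral_Icc:
  fixes h :: "real \<Rightarrow> 'a::euclidean_space"
  assumes "continuous_on UNIV h" "vanishes_beyond c h"
  shows "(\<integral>t. h t \<partial>lborel) = integral {-c..c} h" and "integrable lborel h"
proof -
  have eq: "h = (\<lambda>t. indicator {-c..c} t *\<^sub>R h t)"
    using assms(2) by (auto simp: vanishes_beyond_def indicator_def fun_eq_iff)
  have si: "set_integrable lborel {-c..c} h"
    by (rule borel_integrable_atLeastAtMost'[OF continuous_on_subset[OF assms(1)]]) auto
  then show "integrable lborel h"
    unfolding set_integrable_def by (subst eq)
  have "(\<integral>t. h t \<partial>lborel) = (LINT t:{-c..c}|lborel. h t)"
    unfolding set_lebesgue_integral_def by (subst eq) (rule refl)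
  then show "(\<integral>t. h t \<partial>lborel) = integral {-c..c} h"
    using set_borel_integral_eq_integral(2)[OF si] by simp
qed

lemma
  fixes g :: "real \<Rightarrow> complex"
  assumes "continuous_on UNIV g" "vanishes_beyond a g" "a \<le> c"
  shows fourier_c_eq_integral_Icc: "fourier_c g w = integral {-c..c} (\<lambda>t. g t * fourier_kernel w t)"
    and integrable_times_fourier_kernel: "integrable lborel (\<lambda>t. g t * fourier_kernel w t)"
proof -
  have "continuous_on UNIV (\<lambda>t. g t * fourier_kernel w t)"
    by (intro continuous_intros assms(1))
  moreover have "vanishes_beyond c (\<lambda>t. g t * fourier_kernel w t)"
    using assms(2,3) by (simp add: vanishes_beyond_def)
  ultimately show "fourier_c g w = integral {-c..c} (\<lambda>t. g t * fourier_kernel w t)"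
    and "integrable lborel (\<lambda>t. g t * fourier_kernel w t)"
    by (simp_all add: fourier_c_kernel lborel_integral_eq_integral_Icc)
qed

lemma fourier_c_deriv_seq_Suc:
  assumes D: "deriv_seq D" "vanishes_beyond a (D 0)"
  shows "fourier_c (D (Suc n)) w = 2 * of_real pi * \<i> * w * fourier_c (D n) w"
proof -
  define c where "c = \<bar>a\<bar> + 1"
  define q where "q = - 2 * of_real pi * \<i> * w"
  have van: "vanishes_beyond a (D k)" for k
    by (rule deriv_seq_vanishes_beyond[OF D])
  have F: "fourier_c (D k) w = integral {-c..c} (\<lambda>t. D k t * fourier_kernel w t)" for k
    by (rule fourier_c_eq_integral_Icc[OF deriv_seq_continuous_on[OF D(1)] van]) (simp add: c_def)
  have "((\<lambda>t. D n t * fourier_kernel w t) has_vector_derivative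
      D (Suc n) t * fourier_kernel w t + D n t * (q * fourier_kernel w t)) (at t within {-c..c})" for t
    using has_vector_derivative_mult[OF deriv_seqD[OF D(1)] fourier_kernel_has_vector_derivative]
    by (simp add: q_def add.commute)
  then have "((\<lambda>t. D (Suc n) t * fourier_kernel w t + D n t * (q * fourier_kernel w t)) has_integral
      (D n c * fourier_kernel w c - D n (-c) * fourier_kernel w (-c))) {-c..c}"
    by (intro fundamental_theorem_of_calculus) (auto simp: c_def)
  moreover have "D n c = 0" "D n (-c) = 0"
    using van[of n] by (auto simp: vanishes_beyond_def c_def)
  ultimately have "((\<lambda>t. D (Suc n) t * fourier_kernel w t + q * (D n t * fourier_kernel w t))
      has_integral 0) {-c..c}"
    by (simp add: mult_ac)
  then have "integral {-c..c} (\<lambda>t. D (Suc n) t * fourier_kernel w t + q * (D n t * fourier_kernel w t)) = 0"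
    by (rule integral_unique)
  moreover have int: "(\<lambda>t. D k t * fourier_kernel w t) integrable_on {-c..c}" for k
    by (intro integrable_continuous_interval continuous_intros deriv_seq_continuous_on[OF D(1)])
  ultimately have "integral {-c..c} (\<lambda>t. D (Suc n) t * fourier_kernel w t)
      + q * integral {-c..c} (\<lambda>t. D n t * fourier_kernel w t) = 0"
    by (simp add: integral_add[OF int integrable_on_mult_right[OF int]])
  then show ?thesis
    unfolding F q_def by (simp add: algebra_simps add_eq_0_iff2)
qed

lemma fourier_c_deriv_seq:
  assumes "deriv_seq D" "vanishes_beyond a (D 0)"
  shows "fourier_c (D n) w = (2 * of_real pi * \<i> * w) ^ n * fourier_c (D 0) w"
  by (induction n) (simp_all add: fourier_c_deriv_seq_Suc[OF assms] mult_ac)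

lemma norm_fourier_c_le:
  assumes "continuous_on UNIV g" "vanishes_beyond a g" "0 \<le> a" "\<And>t. norm (g t) \<le> M"
  shows "norm (fourier_c g w) \<le> M * exp (2 * pi * a * \<bar>Im w\<bar>) * (2 * a)"
proof -
  have "0 \<le> M"
    using assms(4)[of 0] by (meson norm_ge_zero order.trans)
  have "norm (integral {-a..a} (\<lambda>t. g t * fourier_kernel w t)) \<le> M * exp (2 * pi * a * \<bar>Im w\<bar>) * (a - - a)"
  proof (rule integral_bound)
    show "continuous_on {- a..a} (\<lambda>t. g t * fourier_kernel w t)"
      by (intro continuous_intros continuous_on_subset[OF assms(1)]) auto
    fix t
    assume "t \<in> {-a..a}"
    then have "norm (fourier_kernel w t) \<le> exp (2 * pi * a * \<bar>Im w\<bar>)"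
      by (intro norm_fourier_kernel_le) auto
    then show "norm (g t * fourier_kernel w t) \<le> M * exp (2 * pi * a * \<bar>Im w\<bar>)"
      unfolding norm_mult using \<open>0 \<le> M\<close> by (intro mult_mono assms(4)) auto
  qed (use assms in auto)
  then show ?thesis
    using fourier_c_eq_integral_Icc[OF assms(1,2), of a] by simp
qed

lemma fourier_c_decay:
  assumes D: "deriv_seq D" "vanishes_beyond a (D 0)" and "0 \<le> a" and "\<And>t. norm (D n t) \<le> M"
  shows "(2 * pi * norm w) ^ n * norm (fourier_c (D 0) w) \<le> M * exp (2 * pi * a * \<bar>Im w\<bar>) * (2 * a)"
proof -
  have "norm (fourier_c (D n) w) \<le> M * exp (2 * pi * a * \<bar>Im w\<bar>) * (2 * a)"
    using assms
    by (intro norm_fourier_c_le deriv_seq_continuous_on deriv_seq_vanishes_beyond[OF D]) auto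
  then show ?thesis
    by (simp add: fourier_c_deriv_seq[OF D, of n] norm_mult norm_power)
qed

lemma fourier_c_modulate:
  "fourier_c (\<lambda>t. g t * exp (2 * of_real pi * \<i> * of_real s * of_real t)) w = fourier_c g (w - of_real s)"
  unfolding fourier_c_def
  by (rule Bochner_Integration.integral_cong[OF refl]) (simp add: mult_exp_exp algebra_simps)

lemma fourier_c_dilate:
  assumes "0 < d"
  shows "fourier_c (\<lambda>t. of_real (1/d) * g (t / d)) w = fourier_c g (of_real d * w)"
proof -
  have "fourier_c (\<lambda>t. of_real (1/d) * g (t / d)) w =
      \<bar>d\<bar> *\<^sub>R (\<integral>x. of_real (1/d) * g ((0 + d * x) / d) * fourier_kernel w (0 + d * x) \<partial>lborel)"
    unfolding fourier_c_kernel using assms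
    by (subst lborel_integral_real_affine[where c=d and t=0]) auto
  also have "\<dots> = fourier_c g (of_real d * w)"
    using assms by (simp add: fourier_c_kernel scaleR_conv_of_real fourier_kernel_def mult_ac)
  finally show ?thesis .
qed

section \<open>A bump and its self-convolution\<close>

definition bump :: "real \<Rightarrow> real" where
  "bump t = flat 0 (1/2 + t) * flat 0 (1/2 - t)"

definition bump_deriv :: "nat \<Rightarrow> real \<Rightarrow> complex" where
  "bump_deriv n t = (\<Sum>k\<le>n. of_nat (n choose k) *
     (of_real (flat k (1/2 + t)) * of_real ((-1) ^ (n - k) * flat (n - k) (1/2 - t))))"

lemma deriv_seq_bump_deriv: "deriv_seq bump_deriv"
proof -
  have "deriv_seq (\<lambda>n t. complex_of_real (flat n t))"
    by (rule deriv_seq_of_real) (rule flat_has_real_derivative)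
  from deriv_seq_mult[OF deriv_seq_affine[OF this, of 1 "1/2"] deriv_seq_affine[OF this, of "-1" "1/2"]]
  show ?thesis
    by (simp add: bump_deriv_def[abs_def] mult_ac add.commute)
qed

lemma continuous_on_bump_deriv [continuous_intros]:
  "continuous_on S f \<Longrightarrow> continuous_on S (\<lambda>x. bump_deriv n (f x))"
  by (rule continuous_on_compose2[OF deriv_seq_continuous_on[OF deriv_seq_bump_deriv, of UNIV]]) auto

lemma bump_deriv_0: "bump_deriv 0 t = of_real (bump t)"
  by (simp add: bump_deriv_def bump_def)

lemma bump_nonneg: "0 \<le> bump t"
  by (simp add: bump_def flat_def)

lemma bump_even: "bump (- t) = bump t"
  by (simp add: bump_def mult.commute)

lemma bump_pos_0: "0 < bump 0"
  by (simp add: bump_def flat_def)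

lemma vanishes_beyond_bump: "vanishes_beyond (1/2) (bump_deriv 0)"
  by (auto simp: vanishes_beyond_def bump_deriv_0 bump_def flat_def)

lemma continuous_on_bump: "continuous_on S bump"
proof -
  have "continuous_on S (\<lambda>t. Re (bump_deriv 0 t))"
    by (intro continuous_intros)
  then show ?thesis
    by (simp add: bump_deriv_0)
qed

lemma vanishes_beyond_shift:
  assumes "vanishes_beyond a f" "\<bar>u\<bar> \<le> b"
  shows "vanishes_beyond (a + b) (\<lambda>t. f (t - u))"
  unfolding vanishes_beyond_def
proof (intro allI impI)
  fix t
  assume "a + b < \<bar>t\<bar>"
  with assms(2) have "a < \<bar>t - u\<bar>" by linarith
  with assms(1) show "f (t - u) = 0"
    by (simp add: vanishes_beyond_def)
qed

text \<open>Convolving the bump with itself makes the transform a square, hence nonnegative on the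
  real axis.\<close>

definition bump_conv_deriv :: "nat \<Rightarrow> real \<Rightarrow> complex" where
  "bump_conv_deriv n t = integral {-1/2..1/2} (\<lambda>u. bump_deriv n (t - u) * bump_deriv 0 u)"

lemma deriv_seq_bump_conv_deriv: "deriv_seq bump_conv_deriv"
  unfolding deriv_seq_def
proof (intro allI)
  fix n x
  have "((\<lambda>x. integral (cbox (-1/2) (1/2)) (\<lambda>u. bump_deriv n (x - u) * bump_deriv 0 u))
      has_vector_derivative integral (cbox (-1/2) (1/2)) (\<lambda>u. bump_deriv (Suc n) (x - u) * bump_deriv 0 u))
      (at x within UNIV)"
  proof (rule leibniz_rule_vector_derivative)
    fix x u :: real
    have "((\<lambda>x. x - u) has_vector_derivative 1) (at x)"
      by (auto intro!: derivative_eq_intros)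
    then have "((bump_deriv n \<circ> (\<lambda>x. x - u)) has_vector_derivative (1 *\<^sub>R bump_deriv (Suc n) (x - u))) (at x)"
      by (rule vector_diff_chain_at) (simp add: deriv_seqD[OF deriv_seq_bump_deriv])
    then show "((\<lambda>x. bump_deriv n (x - u) * bump_deriv 0 u) has_vector_derivative
        bump_deriv (Suc n) (x - u) * bump_deriv 0 u) (at x within UNIV)"
      by (auto intro!: derivative_intros simp: o_def)
  next
    fix x :: real
    show "(\<lambda>u. bump_deriv n (x - u) * bump_deriv 0 u) integrable_on cbox (-1/2) (1/2)"
      by (intro integrable_continuous continuous_intros)
  next
    have "continuous_on (UNIV \<times> cbox (-1/2) (1/2))
        (\<lambda>p. bump_deriv (Suc n) (fst p - snd p) * bump_deriv 0 (snd p))"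
      by (intro continuous_intros)
    then show "continuous_on (UNIV \<times> cbox (-1/2) (1/2))
        (\<lambda>(x, u). bump_deriv (Suc n) (x - u) * bump_deriv 0 u)"
      by (simp add: case_prod_unfold)
  qed auto
  then show "(bump_conv_deriv n has_vector_derivative bump_conv_deriv (Suc n) x) (at x)"
    by (simp add: bump_conv_deriv_def[abs_def] cbox_interval)
qed

lemma continuous_on_bump_conv_deriv [continuous_intros]:
  "continuous_on S f \<Longrightarrow> continuous_on S (\<lambda>x. bump_conv_deriv n (f x))"
  by (rule continuous_on_compose2[OF deriv_seq_continuous_on[OF deriv_seq_bump_conv_deriv, of UNIV]]) auto

lemma vanishes_beyond_bump_conv: "vanishes_beyond 1 (bump_conv_deriv 0)"
  unfolding vanishes_beyond_def
proof (intro allI impI)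
  fix t :: real
  assume t: "1 < \<bar>t\<bar>"
  have "integral {-1/2..1/2} (\<lambda>u. bump_deriv 0 (t - u) * bump_deriv 0 u) = integral {-1/2..1/2::real} (\<lambda>u. 0)"
  proof (rule integral_cong)
    fix u :: real
    assume "u \<in> {-1/2..1/2}"
    then have "vanishes_beyond (1/2 + 1/2) (\<lambda>t. bump_deriv 0 (t - u))"
      by (intro vanishes_beyond_shift vanishes_beyond_bump) auto
    with t show "bump_deriv 0 (t - u) * bump_deriv 0 u = 0"
      by (simp add: vanishes_beyond_def)
  qed
  then show "bump_conv_deriv 0 t = 0"
    by (simp add: bump_conv_deriv_def)
qed

lemma integral_shifted_bump_times_fourier_kernel:
  assumes "\<bar>u\<bar> \<le> 1/2"
  shows "integral {-1..1} (\<lambda>t. bump_deriv 0 (t - u) * fourier_kernel w t)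
    = fourier_kernel w u * fourier_c (bump_deriv 0) w"
proof -
  have "integral {-1..1} (\<lambda>t. bump_deriv 0 (t - u) * fourier_kernel w t)
      = fourier_c (\<lambda>t. bump_deriv 0 (t - u)) w"
    using assms
    by (intro fourier_c_eq_integral_Icc[symmetric, where a="1/2 + 1/2"] vanishes_beyond_shift
        vanishes_beyond_bump continuous_intros) auto
  also have "\<dots> = \<bar>1\<bar> *\<^sub>R (\<integral>x. bump_deriv 0 ((u + 1 * x) - u) * fourier_kernel w (u + 1 * x) \<partial>lborel)"
    unfolding fourier_c_kernel by (rule lborel_integral_real_affine) simp
  also have "\<dots> = (\<integral>x. fourier_kernel w u * (bump_deriv 0 x * fourier_kernel w x) \<partial>lborel)"
    by (simp add: fourier_kernel_add mult_ac)
  also have "\<dots> = fourier_kernel w u * fourier_c (bump_deriv 0) w"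
    by (simp add: fourier_c_kernel)
  finally show ?thesis .
qed

lemma fourier_c_bump_conv: "fourier_c (bump_conv_deriv 0) w = fourier_c (bump_deriv 0) w ^ 2"
proof -
  let ?F = "fourier_c (bump_deriv 0) w"
  have "fourier_c (bump_conv_deriv 0) w = integral {-1..1} (\<lambda>t. bump_conv_deriv 0 t * fourier_kernel w t)"
    by (rule fourier_c_eq_integral_Icc[OF deriv_seq_continuous_on[OF deriv_seq_bump_conv_deriv]
          vanishes_beyond_bump_conv]) simp
  also have "\<dots> = integral {-1..1} (\<lambda>t. integral {-1/2..1/2}
      (\<lambda>u. bump_deriv 0 (t - u) * bump_deriv 0 u * fourier_kernel w t))"
    by (simp add: bump_conv_deriv_def)
  also have "\<dots> = integral {-1/2..1/2} (\<lambda>u. integral {-1..1}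
      (\<lambda>t. bump_deriv 0 (t - u) * bump_deriv 0 u * fourier_kernel w t))"
  proof -
    have "continuous_on (cbox (-1, -1/2) (1, 1/2))
        (\<lambda>p::real \<times> real. bump_deriv 0 (fst p - snd p) * bump_deriv 0 (snd p) * fourier_kernel w (fst p))"
      by (intro continuous_intros)
    then have "continuous_on (cbox (-1, -1/2) (1, 1/2))
        (\<lambda>(t, u). bump_deriv 0 (t - u) * bump_deriv 0 u * fourier_kernel w t)"
      by (simp add: case_prod_unfold)
    from integral_swap_continuous[OF this] show ?thesis
      by (simp add: cbox_interval)
  qed
  also have "\<dots> = integral {-1/2..1/2} (\<lambda>u. bump_deriv 0 u * fourier_kernel w u * ?F)"
  proof (rule integral_cong)
    fix u :: real
    assume "u \<in> {-1/2..1/2}"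
    then have u: "\<bar>u\<bar> \<le> 1/2"
      by auto
    have "integral {-1..1} (\<lambda>t. bump_deriv 0 (t - u) * bump_deriv 0 u * fourier_kernel w t)
        = integral {-1..1} (\<lambda>t. bump_deriv 0 u * (bump_deriv 0 (t - u) * fourier_kernel w t))"
      by (simp only: mult_ac)
    also have "\<dots> = bump_deriv 0 u * (fourier_kernel w u * ?F)"
      by (simp only: integral_mult_right integral_shifted_bump_times_fourier_kernel[OF u])
    finally show "integral {-1..1} (\<lambda>t. bump_deriv 0 (t - u) * bump_deriv 0 u * fourier_kernel w t)
        = bump_deriv 0 u * fourier_kernel w u * ?F"
      by (simp only: mult_ac)
  qed
  also have "\<dots> = integral {-1/2..1/2} (\<lambda>u. bump_deriv 0 u * fourier_kernel w u) * ?F"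
    by simp
  also have "integral {-1/2..1/2} (\<lambda>u. bump_deriv 0 u * fourier_kernel w u) = ?F"
    using fourier_c_eq_integral_Icc[OF deriv_seq_continuous_on[OF deriv_seq_bump_deriv]
          vanishes_beyond_bump, of "1/2"] by simp
  finally show ?thesis
    by (simp add: power2_eq_square)
qed

lemma Im_fourier_c_bump: "Im (fourier_c (bump_deriv 0) (complex_of_real \<xi>)) = 0"
proof -
  let ?F = "fourier_c (bump_deriv 0) (complex_of_real \<xi>)"
  have "cnj ?F = (\<integral>x. cnj (bump_deriv 0 x * fourier_kernel (complex_of_real \<xi>) x) \<partial>lborel)"
    by (simp only: Bochner_Integration.integral_cnj fourier_c_kernel)
  also have "\<dots> = (\<integral>x. bump_deriv 0 x * fourier_kernel (complex_of_real \<xi>) (- x) \<partial>lborel)"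
    by (simp add: fourier_kernel_def exp_cnj bump_deriv_0)
  also have "\<dots> = \<bar>-1\<bar> *\<^sub>R (\<integral>x. bump_deriv 0 (0 + (-1) * x)
      * fourier_kernel (complex_of_real \<xi>) (- (0 + (-1) * x)) \<partial>lborel)"
    by (rule lborel_integral_real_affine) simp
  also have "\<dots> = ?F"
    by (simp add: fourier_c_kernel bump_deriv_0 bump_even)
  finally show ?thesis
    by (metis Reals_cnj_iff complex_is_Real_iff)
qed

definition bump_mass :: real where
  "bump_mass = integral {-1/2..1/2} bump"

lemma bump_mass_pos: "0 < bump_mass"
proof -
  have int: "bump integrable_on {-1/2..1/2}"
    by (intro integrable_continuous_interval continuous_on_bump)
  have "0 \<le> bump_mass"
    unfolding bump_mass_def by (rule integral_nonneg[OF int bump_nonneg])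
  moreover have "bump_mass \<noteq> 0"
  proof
    assume "bump_mass = 0"
    then have "(bump has_integral 0) (cbox (-1/2) (1/2))"
      using int by (simp add: bump_mass_def cbox_interval has_integral_integral)
    then have "bump 0 = 0"
      using has_integral_0_cbox_imp_0[OF continuous_on_bump, of "-1/2" "1/2" 0] bump_nonneg
      by (auto simp: box_real)
    with bump_pos_0 show False by simp
  qed
  ultimately show ?thesis by simp
qed

lemma Re_fourier_c_bump_ge:
  assumes "\<bar>\<xi>\<bar> \<le> 1/3"
  shows "bump_mass / 2 \<le> Re (fourier_c (bump_deriv 0) (complex_of_real \<xi>))"
proof -
  let ?f = "\<lambda>u. bump_deriv 0 u * fourier_kernel (complex_of_real \<xi>) u"
  have F: "fourier_c (bump_deriv 0) (complex_of_real \<xi>) = integral {-1/2..1/2} ?f"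
    using fourier_c_eq_integral_Icc[OF deriv_seq_continuous_on[OF deriv_seq_bump_deriv]
          vanishes_beyond_bump, of "1/2"] by simp
  have int: "?f integrable_on {-1/2..1/2}"
    by (intro integrable_continuous_interval continuous_intros)
  have Re_int: "Re (integral {-1/2..1/2} ?f) = integral {-1/2..1/2} (\<lambda>u. Re (?f u))"
    by (rule integral_unique[OF has_integral_Re[OF integrable_integral[OF int]], symmetric])
  have "integral {-1/2..1/2} (\<lambda>u. bump u / 2) \<le> integral {-1/2..1/2} (\<lambda>u. Re (?f u))"
  proof (rule integral_le)
    show "(\<lambda>u. bump u / 2) integrable_on {-1/2..1/2}"
      by (auto intro!: integrable_continuous_interval continuous_intros continuous_on_bump)
    show "(\<lambda>u. Re (?f u)) integrable_on {-1/2..1/2}"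
      using integrable_integral[OF int] has_integral_Re by blast
    fix u :: real
    assume u: "u \<in> {-1/2..1/2}"
    have "\<bar>2 * pi * \<xi> * u\<bar> = 2 * pi * (\<bar>\<xi>\<bar> * \<bar>u\<bar>)"
      by (simp add: abs_mult)
    also have "\<dots> \<le> 2 * pi * (1/3 * (1/2))"
      using u assms by (intro mult_left_mono mult_mono) auto
    finally have "cos (pi / 3) \<le> cos \<bar>2 * pi * \<xi> * u\<bar>"
      by (intro cos_monotone_0_pi_le) auto
    then have "1/2 \<le> cos (2 * pi * \<xi> * u)"
      by (simp add: cos_60)
    then show "bump u / 2 \<le> Re (?f u)"
      using bump_nonneg[of u] mult_left_mono[of "1/2" "cos (2 * pi * \<xi> * u)" "bump u"]
      by (simp add: bump_deriv_0 fourier_kernel_def Re_exp)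
  qed
  then show ?thesis
    unfolding F Re_int bump_mass_def by simp
qed

section \<open>Estimates for the transform of the self-convolution\<close>

definition bump_conv_hat :: "complex \<Rightarrow> complex" where
  "bump_conv_hat = fourier_c (bump_conv_deriv 0)"

definition bump_conv_bound :: "nat \<Rightarrow> real" where
  "bump_conv_bound k = (SOME M. \<forall>t. norm (bump_conv_deriv k t) \<le> M)"

lemma vanishes_beyond_bump_conv_deriv: "vanishes_beyond 1 (bump_conv_deriv k)"
  by (rule deriv_seq_vanishes_beyond[OF deriv_seq_bump_conv_deriv vanishes_beyond_bump_conv])

lemma norm_bump_conv_deriv_le: "norm (bump_conv_deriv k t) \<le> bump_conv_bound k"
proof -
  have "\<exists>M. \<forall>t. norm (bump_conv_deriv k t) \<le> M"
    by (rule vanishes_beyond_bounded[OF deriv_seq_continuous_on[OF deriv_seq_bump_conv_deriv]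
          vanishes_beyond_bump_conv_deriv])
  then show ?thesis
    unfolding bump_conv_bound_def by (rule someI_ex[THEN spec])
qed

lemma bump_conv_bound_nonneg: "0 \<le> bump_conv_bound k"
  using norm_bump_conv_deriv_le[of k 0] by (meson norm_ge_zero order.trans)

lemma bump_conv_hat_decay:
  assumes "\<bar>Im w\<bar> \<le> 1"
  shows "(2 * pi * norm w) ^ n * norm (bump_conv_hat w) \<le> 2 * exp (2 * pi) * bump_conv_bound n"
proof -
  have "(2 * pi * norm w) ^ n * norm (bump_conv_hat w)
      \<le> bump_conv_bound n * exp (2 * pi * 1 * \<bar>Im w\<bar>) * (2 * 1)"
    unfolding bump_conv_hat_def
    by (rule fourier_c_decay[OF deriv_seq_bump_conv_deriv vanishes_beyond_bump_conv])
      (auto simp: norm_bump_conv_deriv_le)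
  also have "\<dots> \<le> 2 * exp (2 * pi) * bump_conv_bound n"
    using assms bump_conv_bound_nonneg[of n] by (simp add: mult_left_mono)
  finally show ?thesis .
qed

lemma norm_bump_conv_hat_le:
  assumes "\<bar>Im w\<bar> \<le> 1"
  shows "norm (bump_conv_hat w) \<le> 2 * exp (2 * pi) * bump_conv_bound 0"
  using bump_conv_hat_decay[OF assms, of 0] by simp

lemma bump_conv_hat_decay_Re:
  assumes "\<bar>Im w\<bar> \<le> 1" "1/6 \<le> \<bar>Re w\<bar>"
  shows "norm (bump_conv_hat w) \<le> 2 * exp (2 * pi) * bump_conv_bound n * (1 / (6 * \<bar>Re w\<bar>)) ^ n"
proof -
  have "6 * \<bar>Re w\<bar> \<le> 2 * pi * norm w"
    using pi_gt3 abs_Re_le_cmod[of w] by (intro mult_mono) auto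
  then have "(6 * \<bar>Re w\<bar>) ^ n * norm (bump_conv_hat w) \<le> (2 * pi * norm w) ^ n * norm (bump_conv_hat w)"
    using assms(2) by (intro mult_right_mono power_mono) auto
  also have "\<dots> \<le> 2 * exp (2 * pi) * bump_conv_bound n"
    by (rule bump_conv_hat_decay[OF assms(1)])
  finally show ?thesis
    using assms(2) by (simp add: power_divide field_simps)
qed

lemma Re_bump_conv_hat_of_real:
  "Re (bump_conv_hat (complex_of_real \<xi>)) = (Re (fourier_c (bump_deriv 0) (complex_of_real \<xi>)))\<^sup>2"
  using Im_fourier_c_bump[of \<xi>] by (simp add: bump_conv_hat_def fourier_c_bump_conv power2_eq_square)

lemma Re_bump_conv_hat_nonneg: "0 \<le> Re (bump_conv_hat (complex_of_real \<xi>))"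
  by (simp add: Re_bump_conv_hat_of_real)

lemma Re_bump_conv_hat_ge:
  assumes "\<bar>\<xi>\<bar> \<le> 1/6"
  shows "(bump_mass / 2)\<^sup>2 \<le> Re (bump_conv_hat (complex_of_real \<xi>))"
  unfolding Re_bump_conv_hat_of_real
  using assms bump_mass_pos by (intro power_mono Re_fourier_c_bump_ge) auto

lemma continuous_on_bump_conv_hat: "continuous_on S bump_conv_hat"
proof -
  have eq: "bump_conv_hat = (\<lambda>w. integral (cbox (-1) 1) (\<lambda>t. bump_conv_deriv 0 t * fourier_kernel w t))"
    unfolding bump_conv_hat_def cbox_interval
    by (rule ext, rule fourier_c_eq_integral_Icc[OF deriv_seq_continuous_on[OF deriv_seq_bump_conv_deriv]
          vanishes_beyond_bump_conv]) simp
  have "continuous_on (UNIV \<times> cbox (-1) 1) (\<lambda>(w, t). bump_conv_deriv 0 t * fourier_kernel w t)"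
    unfolding fourier_kernel_def case_prod_unfold
    by (intro continuous_intros)
  then have "continuous_on UNIV bump_conv_hat"
    unfolding eq by (rule integral_continuous_on_param)
  then show ?thesis
    by (rule continuous_on_subset) simp
qed

text \<open>The derivatives of \<open>t \<mapsto> b(t) (e\<^sup>c\<^sup>t - 1)\<close>, \<open>b\<close> the self-convolution of the bump.\<close>

definition bump_conv_exp_deriv :: "real \<Rightarrow> nat \<Rightarrow> real \<Rightarrow> complex" where
  "bump_conv_exp_deriv c n t = (\<Sum>k\<le>n. of_nat (n choose k) *
     (bump_conv_deriv k t * (of_real c ^ (n - k) * exp (of_real c * of_real t)))) - bump_conv_deriv n t"

definition bump_conv_exp_bound :: "nat \<Rightarrow> real" where
  "bump_conv_exp_bound k = exp 1 * (\<Sum>j\<le>k. real (k choose j) * bump_conv_bound j)"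

lemma bump_conv_exp_bound_nonneg: "0 \<le> bump_conv_exp_bound k"
  unfolding bump_conv_exp_bound_def by (intro mult_nonneg_nonneg sum_nonneg) (auto simp: bump_conv_bound_nonneg)

lemma deriv_seq_bump_conv_exp_deriv: "deriv_seq (bump_conv_exp_deriv c)"
  unfolding bump_conv_exp_deriv_def[abs_def]
  by (intro deriv_seq_diff deriv_seq_mult deriv_seq_bump_conv_deriv deriv_seq_exp)

lemma bump_conv_exp_deriv_0:
  "bump_conv_exp_deriv c 0 t = bump_conv_deriv 0 t * (exp (of_real c * of_real t) - 1)"
  by (simp add: bump_conv_exp_deriv_def algebra_simps)

lemma vanishes_beyond_bump_conv_exp: "vanishes_beyond 1 (bump_conv_exp_deriv c 0)"
  using vanishes_beyond_bump_conv by (simp add: vanishes_beyond_def bump_conv_exp_deriv_0)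

lemma abs_exp_minus_one_le:
  fixes x :: real
  assumes "\<bar>x\<bar> \<le> 1"
  shows "\<bar>exp x - 1\<bar> \<le> \<bar>x\<bar> * exp 1"
proof (cases "0 \<le> x")
  case True
  have "(1 - x) * exp x \<le> exp (- x) * exp x"
    using exp_ge_add_one_self[of "- x"] by (intro mult_right_mono) auto
  then have "exp x - 1 \<le> x * exp x"
    by (simp add: algebra_simps exp_minus_inverse)
  also have "\<dots> \<le> x * exp 1"
    using True assms by (intro mult_left_mono) auto
  finally show ?thesis
    using True by simp
next
  case False
  then have "\<bar>exp x - 1\<bar> = 1 - exp x" and "\<bar>x\<bar> = - x"
    by auto
  then have "\<bar>exp x - 1\<bar> \<le> \<bar>x\<bar>"
    using exp_ge_add_one_self[of x] by linarith
  also have "\<dots> \<le> \<bar>x\<bar> * exp 1"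
    by (simp add: mult_le_cancel_left1)
  finally show ?thesis .
qed

lemma
  assumes "\<bar>c\<bar> \<le> 1" and "\<bar>t\<bar> \<le> 1"
  shows norm_exp_mult_of_real_le: "norm (exp (complex_of_real c * complex_of_real t)) \<le> exp 1"
    and norm_exp_mult_of_real_minus_one_le:
      "norm (exp (complex_of_real c * complex_of_real t) - 1) \<le> \<bar>c\<bar> * exp 1"
proof -
  have ct: "\<bar>c * t\<bar> \<le> 1"
    unfolding abs_mult using assms by (intro mult_le_one) auto
  then show "norm (exp (complex_of_real c * complex_of_real t)) \<le> exp 1"
    by (simp add: norm_exp_eq_Re)
  have "exp (complex_of_real c * complex_of_real t) - 1 = complex_of_real (exp (c * t) - 1)"
    by (simp add: exp_of_real[symmetric])
  then have "norm (exp (complex_of_real c * complex_of_real t) - 1) = \<bar>exp (c * t) - 1\<bar>"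
    by (simp only: norm_of_real)
  also have "\<dots> \<le> \<bar>c * t\<bar> * exp 1"
    by (rule abs_exp_minus_one_le[OF ct])
  also have "\<dots> \<le> \<bar>c\<bar> * exp 1"
    using assms unfolding abs_mult by (intro mult_right_mono mult_left_le) auto
  finally show "norm (exp (complex_of_real c * complex_of_real t) - 1) \<le> \<bar>c\<bar> * exp 1" .
qed

lemma norm_bump_conv_exp_deriv_le:
  assumes c: "\<bar>c\<bar> \<le> 1"
  shows "norm (bump_conv_exp_deriv c k t) \<le> \<bar>c\<bar> * bump_conv_exp_bound k"
proof (cases "\<bar>t\<bar> \<le> 1")
  case False
  then have "bump_conv_exp_deriv c k t = 0"
    using deriv_seq_vanishes_beyond[OF deriv_seq_bump_conv_exp_deriv vanishes_beyond_bump_conv_exp]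
    by (simp add: vanishes_beyond_def)
  then show ?thesis
    by (simp add: bump_conv_exp_bound_nonneg)
next
  case True
  define E where "E = exp (complex_of_real c * complex_of_real t)"
  have E: "norm E \<le> exp 1" and E1: "norm (E - 1) \<le> \<bar>c\<bar> * exp 1"
    unfolding E_def using c True by (rule norm_exp_mult_of_real_le norm_exp_mult_of_real_minus_one_le)+
  have "bump_conv_exp_deriv c k t =
      (\<Sum>j<k. of_nat (k choose j) * (bump_conv_deriv j t * (of_real c ^ (k - j) * E)))
      + bump_conv_deriv k t * (E - 1)"
    by (simp add: bump_conv_exp_deriv_def E_def lessThan_Suc_atMost[symmetric] algebra_simps)
  also have "norm \<dots> \<le> (\<Sum>j<k. real (k choose j) * (bump_conv_bound j * (\<bar>c\<bar> * exp 1)))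
      + bump_conv_bound k * (\<bar>c\<bar> * exp 1)"
  proof (rule norm_triangle_le[OF add_mono])
    show "norm (\<Sum>j<k. of_nat (k choose j) * (bump_conv_deriv j t * (of_real c ^ (k - j) * E)))
        \<le> (\<Sum>j<k. real (k choose j) * (bump_conv_bound j * (\<bar>c\<bar> * exp 1)))"
    proof (rule order.trans[OF norm_sum sum_mono])
      fix j
      assume "j \<in> {..<k}"
      then have "\<bar>c\<bar> ^ (k - j) \<le> \<bar>c\<bar>"
        using power_decreasing[of 1 "k - j" "\<bar>c\<bar>"] c by auto
      then have "norm (of_real c ^ (k - j) * E) \<le> \<bar>c\<bar> * exp 1"
        unfolding norm_mult norm_power using E by (intro mult_mono) auto
      then have "real (k choose j) * (norm (bump_conv_deriv j t) * norm (of_real c ^ (k - j) * E))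
          \<le> real (k choose j) * (bump_conv_bound j * (\<bar>c\<bar> * exp 1))"
        by (intro mult_left_mono mult_mono norm_bump_conv_deriv_le bump_conv_bound_nonneg) auto
      then show "norm (of_nat (k choose j) * (bump_conv_deriv j t * (of_real c ^ (k - j) * E)))
          \<le> real (k choose j) * (bump_conv_bound j * (\<bar>c\<bar> * exp 1))"
        by (simp only: norm_mult norm_of_nat)
    qed
    show "norm (bump_conv_deriv k t * (E - 1)) \<le> bump_conv_bound k * (\<bar>c\<bar> * exp 1)"
      unfolding norm_mult using E1 by (intro mult_mono norm_bump_conv_deriv_le bump_conv_bound_nonneg) auto
  qed
  also have "\<dots> = \<bar>c\<bar> * bump_conv_exp_bound k"
    by (simp add: bump_conv_exp_bound_def lessThan_Suc_atMost[symmetric] sum_distrib_left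
        sum_distrib_right algebra_simps)
  finally show ?thesis .
qed

lemma fourier_c_bump_conv_exp:
  "fourier_c (bump_conv_exp_deriv (2 * pi * \<eta>) 0) (complex_of_real \<xi>)
    = bump_conv_hat (complex_of_real \<xi> + \<i> * complex_of_real \<eta>) - bump_conv_hat (complex_of_real \<xi>)"
proof -
  have kernel: "exp (complex_of_real (2 * pi * \<eta>) * complex_of_real t) * fourier_kernel (complex_of_real \<xi>) t
      = fourier_kernel (complex_of_real \<xi> + \<i> * complex_of_real \<eta>) t" for t
    unfolding fourier_kernel_def by (simp add: exp_add[symmetric] algebra_simps)
  have int: "integrable lborel (\<lambda>t. bump_conv_deriv 0 t * fourier_kernel w t)" for w
    by (rule integrable_times_fourier_kernel[OF deriv_seq_continuous_on[OF deriv_seq_bump_conv_deriv]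
          vanishes_beyond_bump_conv order.refl])
  have "fourier_c (bump_conv_exp_deriv (2 * pi * \<eta>) 0) (complex_of_real \<xi>) = (\<integral>t.
      bump_conv_deriv 0 t * fourier_kernel (complex_of_real \<xi> + \<i> * complex_of_real \<eta>) t
      - bump_conv_deriv 0 t * fourier_kernel (complex_of_real \<xi>) t \<partial>lborel)"
    unfolding fourier_c_kernel bump_conv_exp_deriv_0
    by (rule Bochner_Integration.integral_cong[OF refl]) (simp add: algebra_simps flip: kernel)
  also have "\<dots> = bump_conv_hat (complex_of_real \<xi> + \<i> * complex_of_real \<eta>) - bump_conv_hat (complex_of_real \<xi>)"
    unfolding bump_conv_hat_def fourier_c_kernel by (rule Bochner_Integration.integral_diff[OF int int])
  finally show ?thesis .
qed

lemma bump_conv_hat_shift_Im_le: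
  assumes "\<bar>2 * pi * \<eta>\<bar> \<le> 1"
  shows "(2 * pi * \<bar>\<xi>\<bar>) ^ k * norm (bump_conv_hat (complex_of_real \<xi> + \<i> * complex_of_real \<eta>)
      - bump_conv_hat (complex_of_real \<xi>)) \<le> 2 * \<bar>2 * pi * \<eta>\<bar> * bump_conv_exp_bound k"
proof -
  have "(2 * pi * norm (complex_of_real \<xi>)) ^ k * norm (bump_conv_hat (complex_of_real \<xi> + \<i> * complex_of_real \<eta>)
      - bump_conv_hat (complex_of_real \<xi>))
      \<le> \<bar>2 * pi * \<eta>\<bar> * bump_conv_exp_bound k * exp (2 * pi * 1 * \<bar>Im (complex_of_real \<xi>)\<bar>) * (2 * 1)"
    unfolding fourier_c_bump_conv_exp[symmetric]
    by (rule fourier_c_decay[OF deriv_seq_bump_conv_exp_deriv vanishes_beyond_bump_conv_exp])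
      (auto intro: norm_bump_conv_exp_deriv_le[OF assms])
  then show ?thesis
    by (simp add: mult_ac)
qed

definition decay_weight :: "nat \<Rightarrow> real \<Rightarrow> real" where
  "decay_weight n x = (if \<bar>x\<bar> \<le> 1 then 1 else (1 / \<bar>x\<bar>) ^ n)"

lemma decay_weight_nonneg: "0 \<le> decay_weight n x"
  by (simp add: decay_weight_def)

lemma norm_bump_conv_hat_le_decay:
  assumes "\<bar>Im w\<bar> \<le> 1"
  shows "norm (bump_conv_hat w)
    \<le> 2 * exp (2 * pi) * (bump_conv_bound 0 + bump_conv_bound n) * decay_weight n (6 * Re w)"
proof (cases "\<bar>6 * Re w\<bar> \<le> 1")
  case True
  have "norm (bump_conv_hat w) \<le> 2 * exp (2 * pi) * bump_conv_bound 0"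
    by (rule norm_bump_conv_hat_le[OF assms])
  also have "\<dots> \<le> 2 * exp (2 * pi) * (bump_conv_bound 0 + bump_conv_bound n)"
    using bump_conv_bound_nonneg[of n] by simp
  finally show ?thesis
    using True by (simp add: decay_weight_def)
next
  case False
  then have "norm (bump_conv_hat w) \<le> 2 * exp (2 * pi) * bump_conv_bound n * (1 / (6 * \<bar>Re w\<bar>)) ^ n"
    by (intro bump_conv_hat_decay_Re assms) auto
  also have "\<dots> \<le> 2 * exp (2 * pi) * (bump_conv_bound 0 + bump_conv_bound n) * (1 / (6 * \<bar>Re w\<bar>)) ^ n"
    using bump_conv_bound_nonneg[of 0] by (intro mult_right_mono) auto
  finally show ?thesis
    using False by (simp add: decay_weight_def abs_mult)
qed

lemma norm_bump_conv_hat_diff_le_decay: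
  assumes "\<bar>2 * pi * Im w\<bar> \<le> \<epsilon>" and "\<epsilon> \<le> 1"
  shows "norm (bump_conv_hat w - bump_conv_hat (complex_of_real (Re w)))
    \<le> 2 * \<epsilon> * (bump_conv_exp_bound 0 + bump_conv_exp_bound n) * decay_weight n (6 * Re w)"
proof -
  define E where "E = 2 * \<epsilon> * (bump_conv_exp_bound 0 + bump_conv_exp_bound n)"
  define diff where "diff = norm (bump_conv_hat w - bump_conv_hat (complex_of_real (Re w)))"
  have err: "(2 * pi * \<bar>Re w\<bar>) ^ k * diff \<le> E" if "k = 0 \<or> k = n" for k
  proof -
    have "\<bar>2 * pi * Im w\<bar> \<le> 1"
      using assms by linarith
    from bump_conv_hat_shift_Im_le[OF this, of "Re w" k]
    have "(2 * pi * \<bar>Re w\<bar>) ^ k * diff \<le> 2 * \<bar>2 * pi * Im w\<bar> * bump_conv_exp_bound k"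
      unfolding diff_def by (simp only: complex_eq[symmetric])
    also have "\<dots> \<le> E"
      unfolding E_def using that assms bump_conv_exp_bound_nonneg[of 0] bump_conv_exp_bound_nonneg[of n]
      by (intro mult_mono) auto
    finally show ?thesis .
  qed
  show ?thesis
  proof (cases "\<bar>6 * Re w\<bar> \<le> 1")
    case True
    then show ?thesis
      using err[of 0] by (simp add: decay_weight_def E_def diff_def)
  next
    case False
    then have pos: "0 < 6 * \<bar>Re w\<bar>"
      by auto
    have "(6 * \<bar>Re w\<bar>) ^ n * diff \<le> (2 * pi * \<bar>Re w\<bar>) ^ n * diff"
      using pi_gt3 pos unfolding diff_def by (intro mult_right_mono power_mono) auto
    also have "\<dots> \<le> E"
      by (rule err) simp
    finally show ?thesis
      using False pos by (simp add: decay_weight_def abs_mult power_divide field_simps E_def diff_def)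
  qed
qed

text \<open>Near the real axis \<open>bump_conv_hat\<close> is close to its (nonnegative) values on the axis,
  which are bounded below near \<open>0\<close>.\<close>

lemma Re_bump_conv_hat_ge_decay:
  assumes "\<bar>2 * pi * Im w\<bar> \<le> \<epsilon>" and "\<epsilon> \<le> 1"
  shows "(bump_mass / 2)\<^sup>2 * of_bool (\<bar>6 * Re w\<bar> \<le> 1)
      - 2 * \<epsilon> * (bump_conv_exp_bound 0 + bump_conv_exp_bound n) * decay_weight n (6 * Re w)
    \<le> Re (bump_conv_hat w)"
proof -
  have "Re (bump_conv_hat (complex_of_real (Re w))) - Re (bump_conv_hat w)
      \<le> norm (bump_conv_hat w - bump_conv_hat (complex_of_real (Re w)))"
    using abs_Re_le_cmod[of "bump_conv_hat w - bump_conv_hat (complex_of_real (Re w))"] by simp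
  also have "\<dots> \<le> 2 * \<epsilon> * (bump_conv_exp_bound 0 + bump_conv_exp_bound n) * decay_weight n (6 * Re w)"
    by (rule norm_bump_conv_hat_diff_le_decay[OF assms])
  finally show ?thesis
    using Re_bump_conv_hat_nonneg[of "Re w"] Re_bump_conv_hat_ge[of "Re w"]
    by (cases "\<bar>6 * Re w\<bar> \<le> 1") (auto simp: abs_mult)
qed

section \<open>Test functions whose transforms are translates of the bump transform\<close>

definition test_bump :: "real \<Rightarrow> real \<Rightarrow> real \<Rightarrow> complex" where
  "test_bump d s t = of_real (1/d) * bump_conv_deriv 0 (t / d) * exp (2 * of_real pi * \<i> * of_real s * of_real t)"

lemma vanishes_beyond_test_bump:
  assumes "0 < d"
  shows "vanishes_beyond d (test_bump d s)"
  unfolding vanishes_beyond_def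
proof (intro allI impI)
  fix t
  assume "d < \<bar>t\<bar>"
  then have "1 < \<bar>t / d\<bar>"
    using assms by (simp add: abs_div)
  then show "test_bump d s t = 0"
    using vanishes_beyond_bump_conv by (simp add: vanishes_beyond_def test_bump_def)
qed

lemma test_bump_in_test_funs:
  assumes "0 < d"
  shows "test_bump d s \<in> test_funs"
proof -
  define D where
    "D = (\<lambda>n t. complex_of_real (1/d) * (complex_of_real ((1/d) ^ n) * bump_conv_deriv n ((1/d) * t + 0)))"
  define D' where "D' = (\<lambda>n t. \<Sum>k\<le>n. of_nat (n choose k) * (D k t * ((2 * of_real pi * \<i> * of_real s) ^ (n - k)
      * exp ((2 * of_real pi * \<i> * of_real s) * complex_of_real t))))"
  have "deriv_seq D'"
    unfolding D'_def D_def
    by (rule deriv_seq_mult[OF deriv_seq_cmult[OF deriv_seq_affine[OF deriv_seq_bump_conv_deriv]] deriv_seq_exp])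
  moreover have "D' 0 = test_bump d s"
    by (simp add: D'_def D_def test_bump_def fun_eq_iff divide_inverse mult_ac)
  ultimately show ?thesis
    using deriv_seq_in_test_funs[of D' d] vanishes_beyond_test_bump[OF assms] by simp
qed

lemma fourier_c_test_bump:
  assumes "0 < d"
  shows "fourier_c (test_bump d s) z = bump_conv_hat (complex_of_real d * (z - complex_of_real s))"
proof -
  have "fourier_c (test_bump d s) z = fourier_c (\<lambda>t. of_real (1/d) * bump_conv_deriv 0 (t / d)) (z - of_real s)"
    unfolding test_bump_def[abs_def] by (rule fourier_c_modulate)
  also have "\<dots> = bump_conv_hat (complex_of_real d * (z - complex_of_real s))"
    unfolding bump_conv_hat_def by (rule fourier_c_dilate[OF assms])
  finally show ?thesis .
qed

lemma norm_test_bump_le: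
  assumes "0 < d"
  shows "norm (test_bump d s t) \<le> bump_conv_bound 0 / d * indicator {-d..d} t"
proof (cases "\<bar>t\<bar> \<le> d")
  case True
  have "norm (test_bump d s t) = norm (bump_conv_deriv 0 (t / d)) / d"
    using assms by (simp add: test_bump_def norm_mult norm_divide norm_exp_eq_Re)
  also have "\<dots> \<le> bump_conv_bound 0 / d"
    using assms by (intro divide_right_mono norm_bump_conv_deriv_le) auto
  finally show ?thesis
    using True by (simp add: abs_le_iff)
next
  case False
  then have "test_bump d s t = 0"
    using vanishes_beyond_test_bump[OF assms] by (simp add: vanishes_beyond_def)
  moreover have "t \<notin> {-d..d}"
    using False by auto
  ultimately show ?thesis
    by simp
qed

lemma continuous_on_test_bump: "continuous_on S (test_bump d s)"
  unfolding test_bump_def[abs_def] divide_inverse by (intro continuous_intros)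

text \<open>This is where the hypothesis that the transform of \<open>\<mu>\<close> is a measure \<open>\<sigma>\<close> enters: pairing
  \<open>\<sigma>\<close> with a test function concentrated near the origin gives a bound uniform in the shift \<open>s\<close>.\<close>

lemma bounded_integrals_bump_conv_hat:
  assumes "fourier_c_is_measure \<mu>" and "0 < d"
  obtains A where "\<And>s. norm (\<integral>z. bump_conv_hat (complex_of_real d * (z - complex_of_real s)) \<partial>\<mu>) \<le> A"
proof -
  from assms(1) obtain \<nu> h where \<nu>: "locally_finite_borel \<nu>" and h: "h \<in> borel_measurable borel"
    "\<And>x. norm (h x) = 1" and \<sigma>: "\<And>\<phi>. \<phi> \<in> test_funs \<Longrightarrow> (\<integral>x. \<phi> x * h x \<partial>\<nu>) = fourier_c_measure \<mu> \<phi>"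
    unfolding fourier_c_is_measure_def by blast
  have sets: "sets \<nu> = sets borel" and fin: "emeasure \<nu> {-d..d} < \<infinity>"
    using \<nu> unfolding locally_finite_borel_def by auto
  define A where "A = bump_conv_bound 0 / d * measure \<nu> {-d..d}"
  have "norm (\<integral>z. bump_conv_hat (complex_of_real d * (z - complex_of_real s)) \<partial>\<mu>) \<le> A" for s
  proof -
    have bound_int: "integrable \<nu> (\<lambda>x. bump_conv_bound 0 / d * indicator {-d..d} x)"
      using sets fin by (intro integrable_mult_right integrable_real_indicator) auto
    have bound: "norm (test_bump d s x * h x) \<le> bump_conv_bound 0 / d * indicator {-d..d} x" for x
      using norm_test_bump_le[OF assms(2), of s x] h(2)[of x] by (simp add: norm_mult)
    have "(\<lambda>x. test_bump d s x * h x) \<in> borel_measurable \<nu>"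
      unfolding measurable_cong_sets[OF sets refl]
      by (intro borel_measurable_times h borel_measurable_continuous_onI continuous_on_test_bump)
    then have "integrable \<nu> (\<lambda>x. test_bump d s x * h x)"
      by (rule Bochner_Integration.integrable_bound[OF bound_int])
        (intro AE_I2, rule order.trans[OF bound], simp only: real_norm_def abs_ge_self)
    then have "norm (\<integral>x. test_bump d s x * h x \<partial>\<nu>) \<le> (\<integral>x. bump_conv_bound 0 / d * indicator {-d..d} x \<partial>\<nu>)"
      by (rule Bochner_Integration.integral_norm_bound_integral[OF _ bound_int bound])
    also have "\<dots> = A"
      using sets by (simp add: A_def sets_eq_imp_space_eq)
    also have "(\<integral>x. test_bump d s x * h x \<partial>\<nu>)
        = (\<integral>z. bump_conv_hat (complex_of_real d * (z - complex_of_real s)) \<partial>\<mu>)"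
      unfolding \<sigma>[OF test_bump_in_test_funs[OF assms(2)]] fourier_c_measure_def
        fourier_c_test_bump[OF assms(2)] ..
    finally show ?thesis .
  qed
  then show ?thesis
    by (rule that)
qed

definition window :: "real \<Rightarrow> real \<Rightarrow> real \<Rightarrow> complex set" where
  "window H T a = {z \<in> strip H. \<bar>Re z - a\<bar> \<le> T}"

lemma closed_strip: "closed (strip H)"
  unfolding strip_def by (intro closed_Collect_le continuous_intros)

lemma closed_window: "closed (window H T a)"
proof -
  have "window H T a = strip H \<inter> {z. \<bar>Re z - a\<bar> \<le> T}"
    by (auto simp: window_def)
  moreover have "closed {z. \<bar>Re z - a\<bar> \<le> T}"
    by (intro closed_Collect_le continuous_intros)
  ultimately show ?thesis
    using closed_strip by auto
qed

text \<open>A point at distance \<open>d > T\<close> from \<open>s\<close> lies in one of the two windows centred at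
  \<open>s \<plusminus> (2j + 2) T\<close>, where \<open>(2j + 1) T \<le> d\<close>.\<close>

lemma decay_weight_le_windows:
  assumes T: "0 < T" and z: "z \<in> strip H"
  shows "ennreal (decay_weight n ((Re z - s) / T)) \<le> indicator (window H T s) z +
    (\<Sum>j. ennreal ((1 / (2 * real j + 1)) ^ n) *
       (indicator (window H T (s + (2 * real j + 2) * T)) z
        + indicator (window H T (s - (2 * real j + 2) * T)) z))"
    (is "_ \<le> _ + suminf ?g")
proof (cases "\<bar>Re z - s\<bar> \<le> T")
  case True
  then show ?thesis
    using z T by (simp add: decay_weight_def window_def abs_div)
next
  case False
  define d where "d = \<bar>Re z - s\<bar>"
  define m where "m = nat \<lfloor>(d - T) / (2 * T)\<rfloor>"
  have "T < d"
    using False by (simp add: d_def)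
  then have "0 \<le> \<lfloor>(d - T) / (2 * T)\<rfloor>"
    using T by simp
  then have "real m \<le> (d - T) / (2 * T)" and "(d - T) / (2 * T) < real m + 1"
    unfolding m_def by linarith+
  then have lo: "(2 * real m + 1) * T \<le> d" and hi: "d < (2 * real m + 3) * T"
    using T by (simp_all add: field_simps)
  have "decay_weight n ((Re z - s) / T) = (T / d) ^ n"
    using False T by (simp add: decay_weight_def d_def abs_div)
  also have "\<dots> \<le> (1 / (2 * real m + 1)) ^ n"
    using lo T \<open>T < d\<close> by (intro power_mono) (auto simp: field_simps)
  finally have weight: "decay_weight n ((Re z - s) / T) \<le> (1 / (2 * real m + 1)) ^ n" .
  have "z \<in> window H T (s + (2 * real m + 2) * T) \<or> z \<in> window H T (s - (2 * real m + 2) * T)"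
    using z lo hi unfolding window_def d_def by (auto simp: abs_le_iff abs_if algebra_simps split: if_splits)
  then have ind: "1 \<le> indicator (window H T (s + (2 * real m + 2) * T)) z
      + (indicator (window H T (s - (2 * real m + 2) * T)) z :: ennreal)"
    by auto
  have "ennreal (decay_weight n ((Re z - s) / T)) \<le> ennreal ((1 / (2 * real m + 1)) ^ n) * 1"
    using weight by simp
  also have "\<dots> \<le> ?g m"
    by (intro mult_left_mono ind) auto
  also have "\<dots> \<le> suminf ?g"
    using sum_le_suminf[of ?g "{m}"] by auto
  also have "\<dots> \<le> indicator (window H T s) z + suminf ?g"
    by simp
  finally show ?thesis .
qed

text \<open>The window \<open>j\<close> steps away from \<open>s\<close> carries weight at most \<open>(2j + 1)\<^sup>-\<^sup>m\<^sup>-\<^sup>2\<close>, and under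
  a growth bound of order \<open>m\<close> its mass exceeds the mass scale at \<open>s\<close> by at most \<open>(2j + 3)\<^sup>m\<close>.\<close>

definition tail_coeff :: "nat \<Rightarrow> nat \<Rightarrow> real" where
  "tail_coeff m j = (1 / (2 * real j + 1)) ^ (m + 2) * (2 * real j + 3) ^ m"

definition tail_const :: "nat \<Rightarrow> real" where
  "tail_const m = 1 + 2 * (\<Sum>j. tail_coeff m j)"

lemma tail_coeff_nonneg: "0 \<le> tail_coeff m j"
  by (simp add: tail_coeff_def)

lemma summable_tail_coeff: "summable (tail_coeff m)"
proof (rule summable_comparison_test')
  have "summable (\<lambda>j. inverse (real (Suc j) ^ 2))"
    using inverse_power_summable[of 2, where 'a=real] by (subst summable_Suc_iff) simp
  then show "summable (\<lambda>j. 3 ^ m * inverse (real (Suc j) ^ 2))"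
    by (rule summable_mult)
  fix j :: nat
  define a where "a = 2 * real j + 1"
  have a: "0 < a"
    by (simp add: a_def)
  have "tail_coeff m j \<le> (1 / a) ^ (m + 2) * (3 * a) ^ m"
    unfolding tail_coeff_def a_def by (intro mult_left_mono power_mono) auto
  also have "\<dots> = 3 ^ m * inverse (a ^ 2)"
    using a by (simp add: power_add power_mult_distrib power_divide power2_eq_square field_simps)
  also have "\<dots> \<le> 3 ^ m * inverse (real (Suc j) ^ 2)"
    unfolding a_def by (intro mult_left_mono le_imp_inverse_le power_mono) auto
  finally show "norm (tail_coeff m j) \<le> 3 ^ m * inverse (real (Suc j) ^ 2)"
    using tail_coeff_nonneg[of m j] by simp
qed

definition tail_error_const :: "nat \<Rightarrow> real" where
  "tail_error_const m = 2 * (bump_conv_exp_bound 0 + bump_conv_exp_bound (m + 2)) * tail_const m"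

lemma tail_const_ge_1: "1 \<le> tail_const m"
  unfolding tail_const_def using suminf_nonneg[OF summable_tail_coeff tail_coeff_nonneg] by simp

lemma one_plus_abs_shift_le:
  assumes "0 < R" and "\<bar>x\<bar> \<le> (2 * real j + 2) * R"
  shows "1 + \<bar>s + x\<bar> / R \<le> (1 + \<bar>s\<bar> / R) * (2 * real j + 3)"
proof -
  have "\<bar>s + x\<bar> / R \<le> \<bar>s\<bar> / R + (2 * real j + 2)"
    using assms abs_triangle_ineq[of s x] by (simp add: field_simps)
  moreover have "\<bar>s\<bar> / R * 1 \<le> \<bar>s\<bar> / R * (2 * real j + 3)"
    using assms(1) by (intro mult_left_mono) auto
  ultimately show ?thesis
    by (simp add: algebra_simps)
qed

lemma
  assumes "z \<in> strip H" and "0 < \<delta>"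
  shows abs_Im_scaled_shift_le: "\<bar>2 * pi * Im (complex_of_real \<delta> * (z - complex_of_real s))\<bar> \<le> 2 * pi * \<delta> * H"
    and Re_scaled_shift: "6 * Re (complex_of_real \<delta> * (z - complex_of_real s)) = (Re z - s) / (1 / (6 * \<delta>))"
  using assms by (auto simp: strip_def abs_mult mult_left_mono)

lemma indicator_window:
  assumes "z \<in> strip H" and "0 < T"
  shows "indicator (window H T s) z = (of_bool (\<bar>(Re z - s) / T\<bar> \<le> 1) :: real)"
  using assms by (simp add: window_def abs_div)

lemma norm_bump_conv_hat_shift_le:
  assumes "z \<in> strip H" and "0 < \<delta>" and "2 * pi * \<delta> * H \<le> 1"
  shows "norm (bump_conv_hat (complex_of_real \<delta> * (z - complex_of_real s)))
    \<le> 2 * exp (2 * pi) * (bump_conv_bound 0 + bump_conv_bound n) * decay_weight n ((Re z - s) / (1 / (6 * \<delta>)))"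
proof -
  let ?w = "complex_of_real \<delta> * (z - complex_of_real s)"
  have "\<bar>Im ?w\<bar> \<le> 2 * pi * \<bar>Im ?w\<bar>"
    using pi_gt3 by (simp add: mult_le_cancel_right1)
  also have "\<dots> \<le> 1"
    using abs_Im_scaled_shift_le[OF assms(1,2), of s] assms(3) by (simp only: abs_mult abs_of_pos pi_gt_zero)
  finally have "\<bar>Im ?w\<bar> \<le> 1" .
  from norm_bump_conv_hat_le_decay[OF this, of n] show ?thesis
    by (simp only: Re_scaled_shift[OF assms(1,2)])
qed

lemma Re_bump_conv_hat_shift_ge:
  assumes "z \<in> strip H" and "0 < \<delta>" and "2 * pi * \<delta> * H \<le> 1"
  shows "(bump_mass / 2)\<^sup>2 * indicator (window H (1 / (6 * \<delta>)) s) z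
      - 2 * (2 * pi * \<delta> * H) * (bump_conv_exp_bound 0 + bump_conv_exp_bound n)
        * decay_weight n ((Re z - s) / (1 / (6 * \<delta>)))
    \<le> Re (bump_conv_hat (complex_of_real \<delta> * (z - complex_of_real s)))"
proof -
  have "indicator (window H (1 / (6 * \<delta>)) s) z = (of_bool (\<bar>(Re z - s) / (1 / (6 * \<delta>))\<bar> \<le> 1) :: real)"
    using assms(2) by (intro indicator_window assms(1)) simp
  with Re_bump_conv_hat_ge_decay[OF abs_Im_scaled_shift_le[OF assms(1,2), of s] assms(3), where n=n] show ?thesis
    by (simp only: Re_scaled_shift[OF assms(1,2)])
qed

section \<open>Measures of polynomial growth on a strip\<close>

lemma exists_small_scale:
  fixes H K c :: real
  assumes "0 < c"
  obtains \<delta> where "0 < \<delta>" "\<delta> \<le> 1/6" "2 * pi * \<delta> * H \<le> 1" "2 * pi * \<delta> * H * K \<le> c"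
proof -
  have small: "\<forall>\<^sub>F \<delta> in at_right 0. a * \<delta> < b" if "0 < b" for a b :: real
    using order_tendstoD(2)[OF tendsto_mult_right_zero[OF tendsto_ident_at] that] by simp
  have "\<forall>\<^sub>F \<delta> in at_right 0. 0 < \<delta> \<and> 1 * \<delta> < 1/6 \<and> (2 * pi * H) * \<delta> < 1 \<and> (2 * pi * H * K) * \<delta> < c"
    using assms by (intro eventually_conj eventually_at_right_less small) auto
  with eventually_happens'[OF trivial_limit_at_right_real] that show ?thesis
    by (force simp: mult_ac)
qed

lemma absorption_bound:
  fixes g :: "'a \<Rightarrow> real"
  assumes "bdd_above (range g)" and "\<And>b. 0 \<le> g b" and "0 < c" and "e \<le> c / 2"
    and "\<And>G b. 0 \<le> G \<Longrightarrow> (\<And>b'. g b' \<le> G) \<Longrightarrow> c * g b \<le> A + e * G"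
  shows "g a \<le> 2 * A / c"
proof -
  define G where "G = Sup (range g)"
  have g_le: "g b \<le> G" for b
    unfolding G_def by (rule cSup_upper[OF _ assms(1)]) simp
  have G: "0 \<le> G"
    using g_le[of a] assms(2)[of a] by linarith
  have "Sup (range g) \<le> (A + e * G) / c"
    using assms(3) assms(5)[OF G g_le] by (intro cSup_least) (auto simp: field_simps)
  then have "c * G \<le> A + e * G"
    using assms(3) by (simp add: G_def[symmetric] field_simps)
  moreover have "e * G \<le> c / 2 * G"
    using assms(4) G by (rule mult_right_mono)
  ultimately have "G \<le> 2 * A / c"
    using assms(3) by (simp add: field_simps)
  with g_le show ?thesis
    by (rule order.trans)
qed

locale strip_growth_measure =
  fixes \<mu> :: "complex measure" and H C0 \<rho> :: real
  assumes sets_eq: "sets \<mu> = sets borel"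
    and null_outside_strip: "emeasure \<mu> (- strip H) = 0"
    and H_pos: "0 < H" and C0_pos: "0 < C0" and \<rho>_pos: "0 < \<rho>"
    and growth: "\<forall>r>0. emeasure \<mu> {z \<in> strip H. \<bar>Re z\<bar> \<le> r} \<le> ennreal (C0 * max 1 (r powr \<rho>))"
begin

lemma sets_window [measurable]: "window H T a \<in> sets \<mu>"
  using sets_eq closed_window by (simp add: borel_closed)

lemma AE_in_strip: "AE z in \<mu>. z \<in> strip H"
proof (rule AE_I')
  show "- strip H \<in> null_sets \<mu>"
    using null_outside_strip sets_eq closed_strip by (auto simp: null_sets_def borel_open open_Compl)
qed auto

lemma emeasure_window_le:
  assumes "0 < T"
  shows "emeasure \<mu> (window H T a) \<le> ennreal (C0 * max 1 ((\<bar>a\<bar> + T) powr \<rho>))"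
proof -
  have "window H T a \<subseteq> {z \<in> strip H. \<bar>Re z\<bar> \<le> \<bar>a\<bar> + T}"
    by (auto simp: window_def)
  moreover have "{z \<in> strip H. \<bar>Re z\<bar> \<le> \<bar>a\<bar> + T} \<in> sets \<mu>"
    using sets_eq closed_strip by (auto intro!: borel_closed closed_Collect_le continuous_intros simp: strip_def)
  ultimately have "emeasure \<mu> (window H T a) \<le> emeasure \<mu> {z \<in> strip H. \<bar>Re z\<bar> \<le> \<bar>a\<bar> + T}"
    by (rule emeasure_mono)
  also have "\<dots> \<le> ennreal (C0 * max 1 ((\<bar>a\<bar> + T) powr \<rho>))"
    using growth assms by auto
  finally show ?thesis .
qed

lemma emeasure_window:
  assumes "0 < T"
  shows "emeasure \<mu> (window H T a) = ennreal (measure \<mu> (window H T a))"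
  using emeasure_window_le[OF assms, of a] by (intro emeasure_eq_ennreal_measure) (auto simp: top_unique)

lemma measure_window_le:
  assumes "0 < T"
  shows "measure \<mu> (window H T a) \<le> C0 * (1 + \<bar>a\<bar> + T) ^ nat \<lceil>\<rho>\<rceil>"
proof -
  have "measure \<mu> (window H T a) \<le> C0 * max 1 ((\<bar>a\<bar> + T) powr \<rho>)"
    using emeasure_window_le[OF assms, of a] C0_pos \<rho>_pos
    by (simp add: emeasure_window[OF assms] ennreal_le_iff)
  also have "\<dots> \<le> C0 * (1 + \<bar>a\<bar> + T) ^ nat \<lceil>\<rho>\<rceil>"
  proof (intro mult_left_mono)
    have "(\<bar>a\<bar> + T) powr \<rho> \<le> (1 + \<bar>a\<bar> + T) powr \<rho>"
      using assms \<rho>_pos by (intro powr_mono2) auto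
    also have "\<dots> \<le> (1 + \<bar>a\<bar> + T) powr (real (nat \<lceil>\<rho>\<rceil>))"
      using assms \<rho>_pos by (intro powr_mono) auto
    also have "\<dots> = (1 + \<bar>a\<bar> + T) ^ nat \<lceil>\<rho>\<rceil>"
      using assms by (intro powr_realpow) auto
    finally show "max 1 ((\<bar>a\<bar> + T) powr \<rho>) \<le> (1 + \<bar>a\<bar> + T) ^ nat \<lceil>\<rho>\<rceil>"
      using assms by (auto intro: one_le_power)
  qed (use C0_pos in auto)
  finally show ?thesis .
qed

lemma nn_integral_decay_weight_le_windows:
  assumes "0 < T"
  shows "(\<integral>\<^sup>+ z. ennreal (decay_weight n ((Re z - s) / T)) \<partial>\<mu>) \<le> ennreal (measure \<mu> (window H T s)) +
    (\<Sum>j. ennreal ((1 / (2 * real j + 1)) ^ n) *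
       (ennreal (measure \<mu> (window H T (s + (2 * real j + 2) * T)))
        + ennreal (measure \<mu> (window H T (s - (2 * real j + 2) * T)))))"
proof -
  have "(\<integral>\<^sup>+ z. ennreal (decay_weight n ((Re z - s) / T)) \<partial>\<mu>) \<le> (\<integral>\<^sup>+ z. indicator (window H T s) z +
    (\<Sum>j. ennreal ((1 / (2 * real j + 1)) ^ n) *
       (indicator (window H T (s + (2 * real j + 2) * T)) z
        + indicator (window H T (s - (2 * real j + 2) * T)) z)) \<partial>\<mu>)"
    using AE_in_strip
    by (intro nn_integral_mono_AE) (auto elim!: AE_mp intro!: decay_weight_le_windows[OF assms])
  also have "\<dots> = ennreal (measure \<mu> (window H T s)) +
    (\<Sum>j. ennreal ((1 / (2 * real j + 1)) ^ n) *
       (ennreal (measure \<mu> (window H T (s + (2 * real j + 2) * T)))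
        + ennreal (measure \<mu> (window H T (s - (2 * real j + 2) * T)))))"
    by (simp add: nn_integral_add nn_integral_suminf nn_integral_cmult emeasure_window[OF assms])
  finally show ?thesis .
qed

lemma measure_window_shift_le:
  assumes "0 < T" and "T \<le> R" and "0 \<le> G"
    and N: "\<And>a. measure \<mu> (window H T a) \<le> G * (1 + \<bar>a\<bar> / R) ^ m"
    and "\<bar>x\<bar> = (2 * real j + 2) * T"
  shows "measure \<mu> (window H T (s + x)) \<le> G * (1 + \<bar>s\<bar> / R) ^ m * (2 * real j + 3) ^ m"
proof -
  have "\<bar>x\<bar> \<le> (2 * real j + 2) * R"
    using assms by (simp add: mult_left_mono)
  then have "(1 + \<bar>s + x\<bar> / R) ^ m \<le> ((1 + \<bar>s\<bar> / R) * (2 * real j + 3)) ^ m"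
    using assms by (intro power_mono one_plus_abs_shift_le) auto
  then have "G * (1 + \<bar>s + x\<bar> / R) ^ m \<le> G * (1 + \<bar>s\<bar> / R) ^ m * (2 * real j + 3) ^ m"
    using assms by (simp add: power_mult_distrib mult.assoc mult_left_mono)
  with N show ?thesis
    by (rule order.trans)
qed

lemma nn_integral_decay_weight_le:
  assumes T: "0 < T" and R: "T \<le> R" and G: "0 \<le> G"
    and N: "\<And>a. measure \<mu> (window H T a) \<le> G * (1 + \<bar>a\<bar> / R) ^ m"
  shows "(\<integral>\<^sup>+ z. ennreal (decay_weight (m + 2) ((Re z - s) / T)) \<partial>\<mu>)
    \<le> ennreal (G * (1 + \<bar>s\<bar> / R) ^ m * tail_const m)"
proof -
  define W where "W = G * (1 + \<bar>s\<bar> / R) ^ m"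
  have W: "0 \<le> W"
    using G T R by (simp add: W_def)
  note shifted = measure_window_shift_le[OF T R G N, of _ _ s, folded W_def]
  have summand: "ennreal ((1 / (2 * real j + 1)) ^ (m + 2)) *
       (ennreal (measure \<mu> (window H T (s + (2 * real j + 2) * T)))
        + ennreal (measure \<mu> (window H T (s - (2 * real j + 2) * T))))
     \<le> ennreal (2 * W * tail_coeff m j)" for j
  proof -
    have "measure \<mu> (window H T (s + (2 * real j + 2) * T)) + measure \<mu> (window H T (s - (2 * real j + 2) * T))
        \<le> 2 * (W * (2 * real j + 3) ^ m)"
      using shifted[of "(2 * real j + 2) * T" j] shifted[of "- ((2 * real j + 2) * T)" j] T by simp
    then have "(1 / (2 * real j + 1)) ^ (m + 2) * (measure \<mu> (window H T (s + (2 * real j + 2) * T))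
        + measure \<mu> (window H T (s - (2 * real j + 2) * T)))
        \<le> (1 / (2 * real j + 1)) ^ (m + 2) * (2 * (W * (2 * real j + 3) ^ m))"
      by (intro mult_left_mono) auto
    also have "\<dots> = 2 * W * tail_coeff m j"
      by (simp add: tail_coeff_def mult_ac)
    finally show ?thesis
      by (simp add: ennreal_mult[symmetric] ennreal_plus[symmetric] ennreal_leI del: ennreal_plus)
  qed
  have "(\<integral>\<^sup>+ z. ennreal (decay_weight (m + 2) ((Re z - s) / T)) \<partial>\<mu>) \<le> ennreal (measure \<mu> (window H T s)) +
    (\<Sum>j. ennreal ((1 / (2 * real j + 1)) ^ (m + 2)) *
       (ennreal (measure \<mu> (window H T (s + (2 * real j + 2) * T)))
        + ennreal (measure \<mu> (window H T (s - (2 * real j + 2) * T)))))"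
    by (rule nn_integral_decay_weight_le_windows[OF T])
  also have "\<dots> \<le> ennreal W + (\<Sum>j. ennreal (2 * W * tail_coeff m j))"
    using N[of s] by (intro add_mono ennreal_leI suminf_le summand) (auto simp: W_def)
  also have "(\<Sum>j. ennreal (2 * W * tail_coeff m j)) = ennreal (2 * W * (\<Sum>j. tail_coeff m j))"
    using W tail_coeff_nonneg summable_tail_coeff
    by (simp add: suminf_ennreal2 summable_mult suminf_mult[symmetric])
  also have "ennreal W + \<dots> = ennreal (W * tail_const m)"
    using W suminf_nonneg[OF summable_tail_coeff tail_coeff_nonneg]
    by (simp add: tail_const_def ennreal_plus[symmetric] algebra_simps del: ennreal_plus)
  finally show ?thesis
    by (simp add: W_def)
qed

lemma
  assumes "0 < T" and "T \<le> R" and "0 \<le> G"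
    and "\<And>a. measure \<mu> (window H T a) \<le> G * (1 + \<bar>a\<bar> / R) ^ m"
  shows integrable_decay_weight: "integrable \<mu> (\<lambda>z. decay_weight (m + 2) ((Re z - s) / T))"
    and integral_decay_weight_le:
      "(\<integral>z. decay_weight (m + 2) ((Re z - s) / T) \<partial>\<mu>) \<le> G * (1 + \<bar>s\<bar> / R) ^ m * tail_const m"
proof -
  have "(\<lambda>z. decay_weight (m + 2) ((Re z - s) / T)) \<in> borel_measurable borel"
    unfolding decay_weight_def by measurable
  then have meas: "(\<lambda>z. decay_weight (m + 2) ((Re z - s) / T)) \<in> borel_measurable \<mu>"
    by (simp add: measurable_cong_sets[OF sets_eq refl])
  have nn: "(\<integral>\<^sup>+ z. ennreal (decay_weight (m + 2) ((Re z - s) / T)) \<partial>\<mu>)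
      \<le> ennreal (G * (1 + \<bar>s\<bar> / R) ^ m * tail_const m)"
    by (rule nn_integral_decay_weight_le[OF assms])
  then show "integrable \<mu> (\<lambda>z. decay_weight (m + 2) ((Re z - s) / T))"
    by (intro integrableI_nonneg[OF meas])
      (auto simp: decay_weight_nonneg top.not_eq_extremum intro: le_less_trans)
  have "0 \<le> G * (1 + \<bar>s\<bar> / R) ^ m * tail_const m"
    using assms tail_const_ge_1[of m] by simp
  have "(\<integral>z. decay_weight (m + 2) ((Re z - s) / T) \<partial>\<mu>)
      = enn2real (\<integral>\<^sup>+ z. ennreal (decay_weight (m + 2) ((Re z - s) / T)) \<partial>\<mu>)"
    by (rule integral_eq_nn_integral[OF meas]) (simp add: decay_weight_nonneg)
  also have "\<dots> \<le> G * (1 + \<bar>s\<bar> / R) ^ m * tail_const m"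
    by (rule enn2real_leI[OF _ nn]) fact
  finally show "(\<integral>z. decay_weight (m + 2) ((Re z - s) / T) \<partial>\<mu>) \<le> G * (1 + \<bar>s\<bar> / R) ^ m * tail_const m" .
qed

lemma integrable_bump_conv_hat_shift:
  fixes \<delta> :: real
  defines "T \<equiv> 1 / (6 * \<delta>)"
  assumes \<delta>: "0 < \<delta>" and \<delta>H: "2 * pi * \<delta> * H \<le> 1"
    and R: "T \<le> R" and G: "0 \<le> G" and N: "\<And>a. measure \<mu> (window H T a) \<le> G * (1 + \<bar>a\<bar> / R) ^ m"
  shows "integrable \<mu> (\<lambda>z. bump_conv_hat (complex_of_real \<delta> * (z - complex_of_real s)))"
proof (rule Bochner_Integration.integrable_bound)
  have T: "0 < T"
    using \<delta> by (simp add: T_def)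
  show "integrable \<mu> (\<lambda>z. 2 * exp (2 * pi) * (bump_conv_bound 0 + bump_conv_bound (m + 2))
      * decay_weight (m + 2) ((Re z - s) / T))"
    by (intro integrable_mult_right integrable_decay_weight[OF T R G N])
  show "(\<lambda>z. bump_conv_hat (complex_of_real \<delta> * (z - complex_of_real s))) \<in> borel_measurable \<mu>"
    unfolding measurable_cong_sets[OF sets_eq refl]
    by (intro borel_measurable_continuous_onI continuous_on_compose2[OF continuous_on_bump_conv_hat[of UNIV]]
        continuous_intros) auto
  show "AE z in \<mu>. norm (bump_conv_hat (complex_of_real \<delta> * (z - complex_of_real s)))
      \<le> norm (2 * exp (2 * pi) * (bump_conv_bound 0 + bump_conv_bound (m + 2))
        * decay_weight (m + 2) ((Re z - s) / T))"
    using AE_in_strip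
  proof eventually_elim
    case (elim z)
    show ?case
      unfolding T_def by (rule order.trans[OF norm_bump_conv_hat_shift_le[OF elim \<delta> \<delta>H, where n="m + 2"]]) simp
  qed
qed

lemma window_measure_le:
  fixes \<delta> :: real
  defines "T \<equiv> 1 / (6 * \<delta>)"
  assumes \<delta>: "0 < \<delta>" and \<delta>H: "2 * pi * \<delta> * H \<le> 1"
    and R: "T \<le> R" and G: "0 \<le> G" and N: "\<And>a. measure \<mu> (window H T a) \<le> G * (1 + \<bar>a\<bar> / R) ^ m"
    and A: "norm (\<integral>z. bump_conv_hat (complex_of_real \<delta> * (z - complex_of_real s)) \<partial>\<mu>) \<le> A"
  shows "(bump_mass / 2)\<^sup>2 * measure \<mu> (window H T s)
    \<le> A + 2 * pi * \<delta> * H * tail_error_const m * G * (1 + \<bar>s\<bar> / R) ^ m"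
proof -
  define f where "f z = bump_conv_hat (complex_of_real \<delta> * (z - complex_of_real s))" for z
  define t where "t z = decay_weight (m + 2) ((Re z - s) / T)" for z
  define E where "E = 2 * (2 * pi * \<delta> * H) * (bump_conv_exp_bound 0 + bump_conv_exp_bound (m + 2))"
  have T: "0 < T"
    using \<delta> by (simp add: T_def)
  have t_int: "integrable \<mu> t"
    unfolding t_def by (rule integrable_decay_weight[OF T R G N])
  have f_int: "integrable \<mu> f"
    unfolding f_def by (rule integrable_bump_conv_hat_shift[OF \<delta> \<delta>H R[unfolded T_def] G N[unfolded T_def]])
  have ind_int: "integrable \<mu> (indicator (window H T s) :: complex \<Rightarrow> real)"
    using emeasure_window_le[OF T, of s] by (intro integrable_real_indicator) (auto simp: le_less_trans)
  have "(bump_mass / 2)\<^sup>2 * measure \<mu> (window H T s) - E * (\<integral>z. t z \<partial>\<mu>)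
      = (\<integral>z. (bump_mass / 2)\<^sup>2 * indicator (window H T s) z - E * t z \<partial>\<mu>)"
    using ind_int t_int by (simp add: sets_eq_imp_space_eq[OF sets_eq])
  also have "\<dots> \<le> (\<integral>z. Re (f z) \<partial>\<mu>)"
  proof (rule integral_mono_AE)
    show "integrable \<mu> (\<lambda>z. (bump_mass / 2)\<^sup>2 * indicator (window H T s) z - E * t z)"
      by (intro Bochner_Integration.integrable_diff integrable_mult_right ind_int t_int)
    show "integrable \<mu> (\<lambda>z. Re (f z))"
      by (rule integrable_bounded_linear[OF bounded_linear_Re f_int])
    show "AE z in \<mu>. (bump_mass / 2)\<^sup>2 * indicator (window H T s) z - E * t z \<le> Re (f z)"
      using AE_in_strip
    proof eventually_elim
      case (elim z)
      show ?case
        unfolding f_def t_def T_def E_def by (rule Re_bump_conv_hat_shift_ge[OF elim \<delta> \<delta>H])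
    qed
  qed
  also have "\<dots> = Re (\<integral>z. f z \<partial>\<mu>)"
    by (rule integral_Re[OF f_int])
  also have "\<dots> \<le> A"
    using A abs_Re_le_cmod[of "\<integral>z. f z \<partial>\<mu>"] by (simp add: f_def)
  finally have "(bump_mass / 2)\<^sup>2 * measure \<mu> (window H T s) \<le> A + E * (\<integral>z. t z \<partial>\<mu>)"
    by simp
  also have "E * (\<integral>z. t z \<partial>\<mu>) \<le> E * (G * (1 + \<bar>s\<bar> / R) ^ m * tail_const m)"
    unfolding t_def using \<delta> H_pos bump_conv_exp_bound_nonneg[of 0] bump_conv_exp_bound_nonneg[of "m + 2"]
    by (intro mult_left_mono integral_decay_weight_le[OF T R G N]) (auto simp: E_def)
  finally show ?thesis
    by (simp add: E_def tail_error_const_def mult_ac)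
qed

lemma measure_window_le_weighted:
  assumes "1 \<le> T" and "T \<le> R"
  shows "measure \<mu> (window H T a) \<le> C0 * (1 + T + R) ^ nat \<lceil>\<rho>\<rceil> * (1 + \<bar>a\<bar> / R) ^ nat \<lceil>\<rho>\<rceil>"
proof -
  have "1 + \<bar>a\<bar> + T \<le> (1 + T + R) * (1 + \<bar>a\<bar> / R)"
  proof -
    have "\<bar>a\<bar> \<le> (1 + T + R) * \<bar>a\<bar> / R"
      using assms by (simp add: field_simps mult_right_mono)
    then show ?thesis
      using assms by (simp add: distrib_left)
  qed
  then have "C0 * (1 + \<bar>a\<bar> + T) ^ nat \<lceil>\<rho>\<rceil> \<le> C0 * ((1 + T + R) * (1 + \<bar>a\<bar> / R)) ^ nat \<lceil>\<rho>\<rceil>"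
    using C0_pos assms by (intro mult_left_mono power_mono) auto
  with measure_window_le[of T a] assms show ?thesis
    by (simp add: power_mult_distrib mult.assoc)
qed

lemma bdd_above_window_measure_weighted:
  assumes "1 \<le> T" and "T \<le> R"
  shows "bdd_above (range (\<lambda>b. measure \<mu> (window H T b) / (1 + \<bar>b\<bar> / R) ^ nat \<lceil>\<rho>\<rceil>))"
proof (rule bdd_aboveI2)
  fix b
  have "1 \<le> (1 + \<bar>b\<bar> / R) ^ nat \<lceil>\<rho>\<rceil>"
    using assms by simp
  with measure_window_le_weighted[OF assms, of b]
  show "measure \<mu> (window H T b) / (1 + \<bar>b\<bar> / R) ^ nat \<lceil>\<rho>\<rceil> \<le> C0 * (1 + T + R) ^ nat \<lceil>\<rho>\<rceil>"
    by (simp add: divide_le_eq)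
qed

text \<open>The weights \<open>(1 + |b|/R)\<^sup>m\<close> make the absorption argument possible; choosing \<open>R \<ge> |a|\<close>
  afterwards turns the weighted bound at \<open>a\<close> into a uniform one.\<close>

lemma window_measure_bounded:
  fixes \<delta> :: real
  defines "T \<equiv> 1 / (6 * \<delta>)" and "m \<equiv> nat \<lceil>\<rho>\<rceil>"
  assumes \<delta>: "0 < \<delta>" "\<delta> \<le> 1/6" and \<delta>H: "2 * pi * \<delta> * H \<le> 1"
    and small: "2 * pi * \<delta> * H * tail_error_const m \<le> (bump_mass / 2)\<^sup>2 / 2"
    and A: "\<And>s. norm (\<integral>z. bump_conv_hat (complex_of_real \<delta> * (z - complex_of_real s)) \<partial>\<mu>) \<le> A"
  shows "measure \<mu> (window H T a) \<le> 2 ^ (m + 1) * A / (bump_mass / 2)\<^sup>2"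
proof -
  define R where "R = max T \<bar>a\<bar>"
  define w where "w b = (1 + \<bar>b\<bar> / R) ^ m" for b
  have T: "1 \<le> T" and R: "T \<le> R"
    using \<delta> by (simp_all add: T_def R_def field_simps)
  have w: "1 \<le> w b" for b
    using T R by (simp add: w_def)
  have "0 \<le> A"
    using A[of 0] norm_ge_zero order.trans by blast
  have "measure \<mu> (window H T a) / w a \<le> 2 * A / (bump_mass / 2)\<^sup>2"
  proof (rule absorption_bound[where g="\<lambda>b. measure \<mu> (window H T b) / w b"])
    show "bdd_above (range (\<lambda>b. measure \<mu> (window H T b) / w b))"
      unfolding w_def m_def by (rule bdd_above_window_measure_weighted[OF T R])
    show "0 \<le> measure \<mu> (window H T b) / w b" for b
      using w[of b] by simp
    show "0 < (bump_mass / 2)\<^sup>2"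
      using bump_mass_pos by simp
    fix G b
    assume "0 \<le> G" and g_le: "\<And>b'. measure \<mu> (window H T b') / w b' \<le> G"
    have "measure \<mu> (window H T b') \<le> G * w b'" for b'
      using g_le[of b'] w[of b'] by (simp add: divide_le_eq)
    from window_measure_le[OF \<delta>(1) \<delta>H R[unfolded T_def] \<open>0 \<le> G\<close> this[unfolded w_def T_def] A]
    have "(bump_mass / 2)\<^sup>2 * measure \<mu> (window H T b) \<le> A + 2 * pi * \<delta> * H * tail_error_const m * G * w b"
      by (simp only: T_def w_def)
    then have "(bump_mass / 2)\<^sup>2 * (measure \<mu> (window H T b) / w b)
        \<le> A / w b + 2 * pi * \<delta> * H * tail_error_const m * G"
      using w[of b] by (simp add: field_simps)
    also have "A / w b \<le> A"
      using \<open>0 \<le> A\<close> w[of b] by (simp add: divide_le_eq mult_le_cancel_left1)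
    finally show "(bump_mass / 2)\<^sup>2 * (measure \<mu> (window H T b) / w b)
        \<le> A + 2 * pi * \<delta> * H * tail_error_const m * G"
      by simp
  qed (use small in simp)
  moreover have "w a \<le> 2 ^ m"
    unfolding w_def using T R by (intro power_mono) (auto simp: R_def divide_le_eq)
  ultimately show ?thesis
    using w[of a] \<open>0 \<le> A\<close> bump_mass_pos
    by (simp add: field_simps order.trans[OF _ mult_left_mono])
qed

lemma emeasure_unit_slab_le:
  assumes "1/2 \<le> T"
  shows "emeasure \<mu> {z \<in> strip H. s \<le> Re z \<and> Re z \<le> s + 1} \<le> ennreal (measure \<mu> (window H T (s + 1/2)))"
proof -
  have "{z \<in> strip H. s \<le> Re z \<and> Re z \<le> s + 1} \<subseteq> window H T (s + 1/2)"
    using assms by (auto simp: window_def abs_le_iff)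
  then have "emeasure \<mu> {z \<in> strip H. s \<le> Re z \<and> Re z \<le> s + 1} \<le> emeasure \<mu> (window H T (s + 1/2))"
    by (rule emeasure_mono) simp
  also have "\<dots> = ennreal (measure \<mu> (window H T (s + 1/2)))"
    using assms by (simp add: emeasure_window)
  finally show ?thesis .
qed

end

theorem theorem1:
  fixes H C0 \<rho> :: real and \<mu> :: "complex measure"
  assumes "H > 0"
    and "locally_finite_borel \<mu>"
    and "emeasure \<mu> (- strip H) = 0"
    and "C0 > 0" and "\<rho> > 0"
    and "\<forall>r>0. emeasure \<mu> {z \<in> strip H. \<bar>Re z\<bar> \<le> r} \<le> ennreal (C0 * max 1 (r powr \<rho>))"
    and "fourier_c_is_measure \<mu>"
  shows "\<exists>B::real. \<forall>s::real. emeasure \<mu> {z \<in> strip H. s \<le> Re z \<and> Re z \<le> s + 1} \<le> ennreal B"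
proof -
  interpret strip_growth_measure \<mu> H C0 \<rho>
    using assms(1-6) by unfold_locales (auto simp: locally_finite_borel_def)
  obtain \<delta> where \<delta>: "0 < \<delta>" "\<delta> \<le> 1/6" "2 * pi * \<delta> * H \<le> 1"
    and small: "2 * pi * \<delta> * H * tail_error_const (nat \<lceil>\<rho>\<rceil>) \<le> (bump_mass / 2)\<^sup>2 / 2"
    using exists_small_scale[of "(bump_mass / 2)\<^sup>2 / 2"] bump_mass_pos by auto
  obtain A where A: "\<And>s. norm (\<integral>z. bump_conv_hat (complex_of_real \<delta> * (z - complex_of_real s)) \<partial>\<mu>) \<le> A"
    using bounded_integrals_bump_conv_hat[OF assms(7) \<delta>(1)] by blast
  have "1/2 \<le> 1 / (6 * \<delta>)"
    using \<delta> by (simp add: field_simps)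
  with window_measure_bounded[OF \<delta> small A] show ?thesis
    by (blast intro: order.trans[OF emeasure_unit_slab_le ennreal_leI])
qed

end
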